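(* Let $(\mathbb T^2,g)$ be a two-dimensional Riemannian torus and $m\ge1$. If $(\mathbb T^2,g)$ admits a real irreducible rank $m$ Killing tensor field, then $Z^{m-1,c}$ is a potential tensor field for some constant real pseudovector $c\neq0$ of weight $m$. Conversely, assume $(\mathbb T^2,g)$ admits no irreducible Killing tensor fields of ranks $1,\dots,m-1$ (no condition if $m=1$). If $Z^{m-1,c}$ is potential for some constant pseudovector $c\neq0$ of weight $m$, then there exists an irreducible rank $m$ Killing tensor field on the torus.
   Context: Symmetric tensor fields on a Riemannian manifold, product $fh=\sigma(f\otimes h)$, $d=\sigma\nabla$ (symmetrized Levi-Civita covariant derivative). $f$ is Killing if $df=0$; a Killing field of rank $\neq2$ is irreducible if it is not a finite sum $\sum u_iv_i$ of products of Killing fields of positive ranks; for rank 2 one also requires $f\neq cg$, $c$ constant. A field $h$ is potential if $h=dv$ for some smooth symmetric tensor field $v$ (a rank 0 potential field is the zero function). Global isothermal coordinates: $\mathbb T^2=\mathbb C/\Gamma$ for a lattice $\Gamma$, $g=e^{2\mu}(dx^2+dy^2)$ with $\mu$ smooth $\Gamma$-periodic, unique up to $z=az'+b$ for a fixed orientation. A pseudovector of weight $k$ assigns to each such coordinate system a pair $(X^1,X^2)$ with $X^1+iX^2=a^k(X'^1+iX'^2)$, $X^1-iX^2=\bar a^k(X'^1-iX'^2)$ under $z=az'$; constant if $X^1,X^2$ are constants, real if they are real. For $k\ge0$ and a constant pseudovector $c$ of weight $k+1$, $Z^{k,c}$ is the trace free symmetric rank $k$ tensor field with, in global isothermal coordinates,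 $Z^{k,c}_{1\dots1}=e^{2k\mu}(c^1\mu_x+c^2\mu_y)$, $Z^{k,c}_{1\dots12}=e^{2k\mu}(c^2\mu_x-c^1\mu_y)$, the other components being determined by trace freeness $Z_{1\dots1\,2\dots2}+Z_{1\dots1\,2\dots2\,22}=0$; for $k=0$, $Z^{0,c}=c^1\mu_x+c^2\mu_y$. *)

theory Defs
  imports "HOL-Analysis.Analysis"
begin

text \<open>The torus is T2 = C / Gamma, Gamma the lattice spanned by two
 R-linearly independent periods w1 w2; the metric is g = exp(2 mu)(dx^2+dy^2) in
 these global isothermal coordinates, mu smooth and Gamma-periodic.  Tensor fields on the
 torus are represented by their (complex valued, Gamma-periodic) components in these
 coordinates.  A symmetric rank k field f is stored as f :: nat => complex => complex,
 where f j is the component f_{1..1 2..2} with exactly j indices equal to 2 (j <= k),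
 and f j = 0 for j > k.\<close>

definition pdx :: "(complex \<Rightarrow> 'a::real_normed_vector) \<Rightarrow> complex \<Rightarrow> 'a" where
  "pdx f z = frechet_derivative f (at z) 1"

definition pdy :: "(complex \<Rightarrow> 'a::real_normed_vector) \<Rightarrow> complex \<Rightarrow> 'a" where
  "pdy f z = frechet_derivative f (at z) \<i>"

fun Ck :: "nat \<Rightarrow> (complex \<Rightarrow> 'a::real_normed_vector) \<Rightarrow> bool" where
  "Ck 0 f = continuous_on UNIV f"
| "Ck (Suc k) f = (f differentiable_on UNIV \<and> Ck k (pdx f) \<and> Ck k (pdy f))"

definition smooth :: "(complex \<Rightarrow> 'a::real_normed_vector) \<Rightarrow> bool" where
  "smooth f = (\<forall>k. Ck k f)"

definition is_lattice :: "complex \<Rightarrow> complex \<Rightarrow> bool" where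
  "is_lattice w1 w2 = (Im (w2 * cnj w1) \<noteq> 0)"

definition periodic :: "complex \<Rightarrow> complex \<Rightarrow> (complex \<Rightarrow> 'a) \<Rightarrow> bool" where
  "periodic w1 w2 f = (\<forall>z. f (z + w1) = f z \<and> f (z + w2) = f z)"

definition tfield :: "complex \<Rightarrow> complex \<Rightarrow> nat \<Rightarrow> (nat \<Rightarrow> complex \<Rightarrow> complex) \<Rightarrow> bool" where
  "tfield w1 w2 k f =
     ((\<forall>j\<le>k. smooth (f j) \<and> periodic w1 w2 (f j)) \<and> (\<forall>j>k. f j = (\<lambda>z. 0)))"

definition real_field :: "(nat \<Rightarrow> complex \<Rightarrow> complex) \<Rightarrow> bool" where
  "real_field f = (\<forall>j z. Im (f j z) = 0)"

definition pd :: "(complex \<Rightarrow> 'a::real_normed_vector) \<Rightarrow> nat \<Rightarrow> complex \<Rightarrow> 'a" where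
  "pd f i = (if i = 1 then pdx f else pdy f)"

text \<open>Christoffel symbols Gamma^q_{ip} of g = exp(2 mu) delta:
  Gamma^q_{ip} = delta^q_i mu_p + delta^q_p mu_i - delta_{ip} mu_q.\<close>
definition chr :: "(complex \<Rightarrow> real) \<Rightarrow> nat \<Rightarrow> nat \<Rightarrow> nat \<Rightarrow> complex \<Rightarrow> real" where
  "chr mu q i p z =
     (if q = i then pd mu p z else 0) + (if q = p then pd mu i z else 0)
     - (if i = p then pd mu q z else 0)"

text \<open>Covariant derivative: nab mu k f i j = (nabla_i f)_{1..1 2..2} (j twos), for f of rank k.
  nabla_i f_{i1..ik} = d_i f_{i1..ik} - sum_p Gamma^q_{i i_p} f_{i1..q..ik}.\<close>
definition nab :: "(complex \<Rightarrow> real) \<Rightarrow> nat \<Rightarrow> (nat \<Rightarrow> complex \<Rightarrow> complex) \<Rightarrow> nat \<Rightarrow> nat \<Rightarrow> complex \<Rightarrow> complex" where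
  "nab mu k f i j z =
     pd (f j) i z
     - of_nat (k - j) * (of_real (chr mu 1 i 1 z) * f j z + of_real (chr mu 2 i 1 z) * f (j + 1) z)
     - of_nat j * (of_real (chr mu 1 i 2 z) * f (j - 1) z + of_real (chr mu 2 i 2 z) * f j z)"

text \<open>Symmetrized covariant derivative d = sigma nabla, rank k to rank k+1.\<close>
definition dsym :: "(complex \<Rightarrow> real) \<Rightarrow> nat \<Rightarrow> (nat \<Rightarrow> complex \<Rightarrow> complex) \<Rightarrow> nat \<Rightarrow> complex \<Rightarrow> complex" where
  "dsym mu k f j z =
     (if j \<le> k + 1 then
        (of_nat (k + 1 - j) * nab mu k f 1 j z + of_nat j * nab mu k f 2 (j - 1) z) / of_nat (k + 1)
      else 0)"

text \<open>Symmetric product sigma(f (x) h) of a rank k field f and a rank l field h.\<close>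
definition sprod :: "nat \<Rightarrow> nat \<Rightarrow> (nat \<Rightarrow> complex \<Rightarrow> complex) \<Rightarrow> (nat \<Rightarrow> complex \<Rightarrow> complex)
                     \<Rightarrow> nat \<Rightarrow> complex \<Rightarrow> complex" where
  "sprod k l f h j z =
     (if j \<le> k + l then
        (\<Sum>a\<le>k. \<Sum>b\<le>l. if a + b = j then of_nat (k choose a) * of_nat (l choose b) * f a z * h b z else 0)
        / of_nat ((k + l) choose j)
      else 0)"

definition metric_tensor :: "(complex \<Rightarrow> real) \<Rightarrow> nat \<Rightarrow> complex \<Rightarrow> complex" where
  "metric_tensor mu j z = (if j = 0 \<or> j = 2 then of_real (exp (2 * mu z)) else 0)"

definition killing :: "complex \<Rightarrow> complex \<Rightarrow> (complex \<Rightarrow> real) \<Rightarrow> nat \<Rightarrow> (nat \<Rightarrow> complex \<Rightarrow> complex) \<Rightarrow> bool" where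
  "killing w1 w2 mu k f = (tfield w1 w2 k f \<and> dsym mu k f = (\<lambda>j z. 0))"

definition irreducible_killing ::
  "complex \<Rightarrow> complex \<Rightarrow> (complex \<Rightarrow> real) \<Rightarrow> nat \<Rightarrow> (nat \<Rightarrow> complex \<Rightarrow> complex) \<Rightarrow> bool" where
  "irreducible_killing w1 w2 mu m f =
     (killing w1 w2 mu m f \<and>
      \<not> (\<exists>(n::nat) ku kv u v.
            (\<forall>i<n. 0 < ku i \<and> 0 < kv i \<and> ku i + kv i = m \<and>
                   killing w1 w2 mu (ku i) (u i) \<and> killing w1 w2 mu (kv i) (v i)) \<and>
            f = (\<lambda>j z. \<Sum>i<n. sprod (ku i) (kv i) (u i) (v i) j z)) \<and>
      (m = 2 \<longrightarrow> \<not> (\<exists>c::complex. f = (\<lambda>j z. c * metric_tensor mu j z))))"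

definition potential :: "complex \<Rightarrow> complex \<Rightarrow> (complex \<Rightarrow> real) \<Rightarrow> nat \<Rightarrow> (nat \<Rightarrow> complex \<Rightarrow> complex) \<Rightarrow> bool" where
  "potential w1 w2 mu k h =
     (if k = 0 then h = (\<lambda>j z. 0)
      else (\<exists>v. tfield w1 w2 (k - 1) v \<and> h = dsym mu (k - 1) v))"

text \<open>The trace free field Z^{k,c}, c = (c1,c2) a constant pseudovector of weight k+1.
  Z_0 = exp(2k mu)(c1 mu_x + c2 mu_y), Z_1 = exp(2k mu)(c2 mu_x - c1 mu_y), Z_{j+2} = - Z_j.\<close>
definition Zfield :: "(complex \<Rightarrow> real) \<Rightarrow> nat \<Rightarrow> complex \<Rightarrow> complex \<Rightarrow> nat \<Rightarrow> complex \<Rightarrow> complex" where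
  "Zfield mu k c1 c2 j z =
     (if j \<le> k then
        (-1) ^ (j div 2) * of_real (exp (2 * real k * mu z)) *
        (if even j then c1 * of_real (pdx mu z) + c2 * of_real (pdy mu z)
         else c2 * of_real (pdx mu z) - c1 * of_real (pdy mu z))
      else 0)"

end

theory Submission
  imports Defs "HOL-Complex_Analysis.Complex_Analysis" "HOL-Computational_Algebra.Polynomial"
begin

text \<open>A symmetric rank k field f is encoded by its generating polynomial
  P_f(t) = \<Sum>j binom(k, j) f_j t^j; symmetric products become products of polynomials and the metric
  g becomes exp(2 mu) (1 + t^2). For a Killing field f of rank m the function exp(-2 m mu) P_f(i) is
  holomorphic and doubly periodic, hence constant, and similarly at -i. So f agrees at t = i and
  t = -i with a trace-free field A whose generating polynomial is
  exp(2 m mu) (\<alpha> (1 - i t)^m + \<beta> (1 + i t)^m), and f - A is divisible by 1 + t^2: f = A + g Q.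
  Since d A = g Z^{m-1,c} with c determined by \<alpha> and \<beta>, and d (g Q) = g d Q, the Killing equation
  for f becomes d Q = Z^{m-1,-c}. If \<alpha> = 0 then f = g Q is reducible; otherwise Z is potential.
  Conversely, if Z^{m-1,c} = d v then A + g v is a Killing field whose generating polynomial does not
  vanish at both i and -i, while all products of Killing fields of lower rank do vanish there as
  long as there are no irreducible ones (induction on the rank).\<close>

section \<open>Smooth functions on the plane\<close>

lemma has_derivative_pdx: "(f has_derivative D) (at z) \<Longrightarrow> pdx f z = D 1"
  unfolding pdx_def using frechet_derivative_at by metis

lemma has_derivative_pdy: "(f has_derivative D) (at z) \<Longrightarrow> pdy f z = D \<i>"
  unfolding pdy_def using frechet_derivative_at by metis

lemma Ck_SucD: "Ck (Suc k) f \<Longrightarrow> Ck k f"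
proof (induction k arbitrary: f)
  case 0
  then show ?case by (simp add: differentiable_imp_continuous_on)
next
  case (Suc k)
  then show ?case using Ck.simps(2)[of k f] Ck.simps(2)[of "Suc k" f] by blast
qed

lemma Ck_Suc_has_derivative: "Ck (Suc k) f \<Longrightarrow> (f has_derivative frechet_derivative f (at z)) (at z)"
  by (metis Ck.simps(2) UNIV_I differentiable_on_def frechet_derivative_works
      differentiable_at_withinI at_within_open open_UNIV)

lemma smooth_has_derivative: "smooth f \<Longrightarrow> (f has_derivative frechet_derivative f (at z)) (at z)"
  unfolding smooth_def using Ck_Suc_has_derivative by blast

lemma smooth_differentiable: "smooth f \<Longrightarrow> f differentiable (at z)"
  using smooth_has_derivative differentiableI by blast

lemma smooth_continuous_on: "smooth f \<Longrightarrow> continuous_on UNIV f"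
  unfolding smooth_def by (metis Ck.simps(1))

lemma smooth_pdx: "smooth f \<Longrightarrow> smooth (pdx f)"
  and smooth_pdy: "smooth f \<Longrightarrow> smooth (pdy f)"
  unfolding smooth_def by (metis Ck.simps(2))+

lemma Ck_const: "Ck k (\<lambda>z. c)"
proof (induction k arbitrary: c)
  case (Suc k)
  have "pdx (\<lambda>z. c) = (\<lambda>z. 0)" "pdy (\<lambda>z. c) = (\<lambda>z. 0)"
    by (auto simp: has_derivative_pdx[OF has_derivative_const] has_derivative_pdy[OF has_derivative_const])
  then show ?case using Suc by simp
qed simp

lemma Ck_bounded_linear:
  assumes "bounded_linear L"
  shows "Ck k f \<Longrightarrow> Ck k (\<lambda>z. L (f z))"
proof (induction k arbitrary: f)
  case 0
  then show ?case using assms by (simp add: bounded_linear.continuous_on)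
next
  case (Suc k)
  have d: "((\<lambda>z. L (f z)) has_derivative (\<lambda>h. L (frechet_derivative f (at z) h))) (at z)" for z
    using bounded_linear.has_derivative[OF assms Ck_Suc_has_derivative[OF Suc.prems]] .
  then have "pdx (\<lambda>z. L (f z)) = (\<lambda>z. L (pdx f z))" "pdy (\<lambda>z. L (f z)) = (\<lambda>z. L (pdy f z))"
    using has_derivative_pdx[OF d] has_derivative_pdy[OF d] unfolding pdx_def pdy_def by auto
  moreover have "(\<lambda>z. L (f z)) differentiable_on UNIV"
    using d differentiable_on_def differentiableI by blast
  ultimately show ?case using Suc by auto
qed

lemma Ck_add: "Ck k f \<Longrightarrow> Ck k g \<Longrightarrow> Ck k (\<lambda>z. f z + g z)"
proof (induction k arbitrary: f g)
  case 0
  then show ?case by (auto intro: continuous_intros)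
next
  case (Suc k)
  have d: "((\<lambda>z. f z + g z) has_derivative
             (\<lambda>h. frechet_derivative f (at z) h + frechet_derivative g (at z) h)) (at z)" for z
    using has_derivative_add[OF Ck_Suc_has_derivative[OF Suc.prems(1)] Ck_Suc_has_derivative[OF Suc.prems(2)]] .
  then have "pdx (\<lambda>z. f z + g z) = (\<lambda>z. pdx f z + pdx g z)"
    "pdy (\<lambda>z. f z + g z) = (\<lambda>z. pdy f z + pdy g z)"
    using has_derivative_pdx[OF d] has_derivative_pdy[OF d] unfolding pdx_def pdy_def by auto
  then show ?case using Suc by (auto intro: differentiable_on_add)
qed

lemma Ck_mult:
  fixes f g :: "complex \<Rightarrow> 'a::real_normed_algebra"
  shows "Ck k f \<Longrightarrow> Ck k g \<Longrightarrow> Ck k (\<lambda>z. f z * g z)"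
proof (induction k arbitrary: f g)
  case 0
  then show ?case by (auto intro: continuous_intros)
next
  case (Suc k)
  have d: "((\<lambda>z. f z * g z) has_derivative
             (\<lambda>h. f z * frechet_derivative g (at z) h + frechet_derivative f (at z) h * g z)) (at z)" for z
    using has_derivative_mult[OF Ck_Suc_has_derivative[OF Suc.prems(1)] Ck_Suc_has_derivative[OF Suc.prems(2)]] .
  then have "pdx (\<lambda>z. f z * g z) = (\<lambda>z. f z * pdx g z + pdx f z * g z)"
    "pdy (\<lambda>z. f z * g z) = (\<lambda>z. f z * pdy g z + pdy f z * g z)"
    using has_derivative_pdx[OF d] has_derivative_pdy[OF d] unfolding pdx_def pdy_def by auto
  moreover have "Ck k f" "Ck k g" using Suc.prems Ck_SucD by blast+
  ultimately show ?case using Suc by (auto intro!: Ck_add differentiable_on_mult)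
qed

lemma Ck_exp:
  fixes h :: "complex \<Rightarrow> real"
  assumes "smooth h"
  shows "Ck k (\<lambda>z. exp (h z))"
proof (induction k)
  case 0
  then show ?case using assms by (simp add: continuous_on_exp smooth_continuous_on)
next
  case (Suc k)
  have d: "((\<lambda>z. exp (h z)) has_derivative (\<lambda>v. exp (h z) * frechet_derivative h (at z) v)) (at z)" for z
    using has_derivative_exp[OF smooth_has_derivative[OF assms]] by (simp add: mult.commute)
  then have "pdx (\<lambda>z. exp (h z)) = (\<lambda>z. exp (h z) * pdx h z)"
    "pdy (\<lambda>z. exp (h z)) = (\<lambda>z. exp (h z) * pdy h z)"
    using has_derivative_pdx[OF d] has_derivative_pdy[OF d] unfolding pdx_def pdy_def by auto
  moreover have "(\<lambda>z. exp (h z)) differentiable_on UNIV"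
    using d differentiable_on_def differentiableI by blast
  moreover have "Ck k (pdx h)" "Ck k (pdy h)"
    using assms smooth_pdx smooth_pdy smooth_def by blast+
  ultimately show ?case using Suc Ck_mult by auto
qed

lemma smooth_const: "smooth (\<lambda>z. c)"
  by (simp add: smooth_def Ck_const)

lemma smooth_bounded_linear: "bounded_linear L \<Longrightarrow> smooth f \<Longrightarrow> smooth (\<lambda>z. L (f z))"
  by (simp add: smooth_def Ck_bounded_linear)

lemma smooth_add: "smooth f \<Longrightarrow> smooth g \<Longrightarrow> smooth (\<lambda>z. f z + g z)"
  by (simp add: smooth_def Ck_add)

lemma smooth_diff: "smooth f \<Longrightarrow> smooth g \<Longrightarrow> smooth (\<lambda>z. f z - g z)"
  using smooth_add[of f "\<lambda>z. - g z"] smooth_bounded_linear[OF bounded_linear_minus[OF bounded_linear_ident]]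
  by fastforce

lemma smooth_mult:
  fixes f g :: "complex \<Rightarrow> 'a::real_normed_algebra"
  shows "smooth f \<Longrightarrow> smooth g \<Longrightarrow> smooth (\<lambda>z. f z * g z)"
  by (simp add: smooth_def Ck_mult)

lemma smooth_sum: "finite S \<Longrightarrow> (\<And>i. i \<in> S \<Longrightarrow> smooth (f i)) \<Longrightarrow> smooth (\<lambda>z. \<Sum>i\<in>S. f i z)"
  by (induction S rule: finite_induct) (auto intro: smooth_add smooth_const)

lemma smooth_if: "(P \<Longrightarrow> smooth f) \<Longrightarrow> smooth (\<lambda>z. if P then f z else 0)"
  by (cases P) (auto simp: smooth_const)

lemma smooth_exp_mult:
  fixes mu :: "complex \<Rightarrow> real"
  shows "smooth mu \<Longrightarrow> smooth (\<lambda>z. complex_of_real (exp (c * mu z)))"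
  using smooth_bounded_linear[OF bounded_linear_of_real]
    smooth_mult[OF smooth_const, of mu c] Ck_exp smooth_def by metis

lemma pdx_pdy_mult:
  fixes f g :: "complex \<Rightarrow> complex"
  assumes "f differentiable (at z)" "g differentiable (at z)"
  shows "pdx (\<lambda>z. f z * g z) z = f z * pdx g z + pdx f z * g z"
    and "pdy (\<lambda>z. f z * g z) z = f z * pdy g z + pdy f z * g z"
proof -
  have d: "((\<lambda>z. f z * g z) has_derivative
          (\<lambda>h. f z * frechet_derivative g (at z) h + frechet_derivative f (at z) h * g z)) (at z)"
    using has_derivative_mult assms frechet_derivative_works by blast
  show "pdx (\<lambda>z. f z * g z) z = f z * pdx g z + pdx f z * g z"
    and "pdy (\<lambda>z. f z * g z) z = f z * pdy g z + pdy f z * g z"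
    using has_derivative_pdx[OF d] has_derivative_pdy[OF d] unfolding pdx_def pdy_def by simp_all
qed

lemma pdx_pdy_cmult:
  fixes f :: "complex \<Rightarrow> complex"
  assumes "f differentiable (at z)"
  shows "pdx (\<lambda>z. c * f z) z = c * pdx f z" and "pdy (\<lambda>z. c * f z) z = c * pdy f z"
  using pdx_pdy_mult[of "\<lambda>z. c" z f] assms
  by (auto simp: has_derivative_pdx[OF has_derivative_const] has_derivative_pdy[OF has_derivative_const])

lemma pdx_pdy_exp_mult:
  fixes mu :: "complex \<Rightarrow> real"
  assumes "smooth mu"
  shows "pdx (\<lambda>z. complex_of_real (exp (c * mu z))) z = of_real (exp (c * mu z)) * of_real c * of_real (pdx mu z)"
    and "pdy (\<lambda>z. complex_of_real (exp (c * mu z))) z = of_real (exp (c * mu z)) * of_real c * of_real (pdy mu z)"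
proof -
  have "((\<lambda>z. exp (c * mu z)) has_derivative (\<lambda>h. exp (c * mu z) * (c * frechet_derivative mu (at z) h))) (at z)"
    using has_derivative_exp[OF has_derivative_mult_right[OF smooth_has_derivative[OF assms]]]
    by (simp add: mult.commute)
  from bounded_linear.has_derivative[OF bounded_linear_of_real this]
  have d: "((\<lambda>z. complex_of_real (exp (c * mu z))) has_derivative
             (\<lambda>h. of_real (exp (c * mu z) * (c * frechet_derivative mu (at z) h)))) (at z)" .
  show "pdx (\<lambda>z. complex_of_real (exp (c * mu z))) z = of_real (exp (c * mu z)) * of_real c * of_real (pdx mu z)"
    and "pdy (\<lambda>z. complex_of_real (exp (c * mu z))) z = of_real (exp (c * mu z)) * of_real c * of_real (pdy mu z)"
    using has_derivative_pdx[OF d] has_derivative_pdy[OF d] unfolding pdx_def pdy_def by simp_all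
qed

section \<open>Doubly periodic functions\<close>

lemma periodic_add_of_int:
  fixes f :: "complex \<Rightarrow> 'a"
  assumes "\<And>z. f (z + w) = f z"
  shows "f (z + of_int a * w) = f z"
proof -
  have "\<forall>z. f (z + of_int a * w) = f z"
  proof (induction a rule: int_induct[where k = 0])
    case (step1 i)
    have "f (z + of_int (i + 1) * w) = f ((z + w) + of_int i * w)" for z
      by (simp add: algebra_simps)
    then show ?case using step1 assms by simp
  next
    case (step2 i)
    have "f (z + of_int (i - 1) * w) = f ((z - w) + of_int i * w)" for z
      by (simp add: algebra_simps)
    moreover have "f (z - w) = f z" for z using assms[of "z - w"] by simp
    ultimately show ?case using step2 by simp
  qed simp
  then show ?thesis by blast
qed

lemma periodic_add_lattice:
  assumes "periodic w1 w2 f"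
  shows "f (z + of_int a * w1 + of_int b * w2) = f z"
proof -
  have "\<And>z. f (z + w1) = f z" "\<And>z. f (z + w2) = f z" using assms by (auto simp: periodic_def)
  then show ?thesis using periodic_add_of_int by metis
qed

lemma lattice_coordinates:
  assumes "is_lattice w1 w2"
  shows "z = of_real (Im (w2 * cnj z) / Im (w2 * cnj w1)) * w1
           + of_real (- Im (w1 * cnj z) / Im (w2 * cnj w1)) * w2"
proof -
  define D where "D = Im (w2 * cnj w1)"
  define a where "a = Im (w2 * cnj z)"
  define b where "b = - Im (w1 * cnj z)"
  have D: "D \<noteq> 0" using assms by (simp add: is_lattice_def D_def)
  have e: "of_real D * z = of_real a * w1 + of_real b * w2"
    by (simp add: complex_eq_iff D_def a_def b_def algebra_simps)
  have "of_real (a / D) * w1 + of_real (b / D) * w2 = (of_real a * w1 + of_real b * w2) / of_real D"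
    using D by (simp add: field_simps)
  also have "\<dots> = z" unfolding e[symmetric] using D by simp
  finally show ?thesis by (simp add: a_def b_def D_def)
qed

text \<open>Every point is a lattice translate of a point of the compact fundamental parallelogram.\<close>
lemma bounded_range_periodic:
  fixes f :: "complex \<Rightarrow> 'a::real_normed_vector"
  assumes lat: "is_lattice w1 w2" and cont: "continuous_on UNIV f" and per: "periodic w1 w2 f"
  shows "bounded (range f)"
proof -
  define g where "g = (\<lambda>p::real \<times> real. of_real (fst p) * w1 + of_real (snd p) * w2)"
  define K where "K = g ` ({0..1} \<times> {0..1})"
  have "continuous_on UNIV g" unfolding g_def by (intro continuous_intros)
  then have "compact K" unfolding K_def
    by (intro compact_continuous_image compact_Times compact_Icc) (auto intro: continuous_on_subset)
  then have "compact (f ` K)" by (intro compact_continuous_image continuous_on_subset[OF cont]) auto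
  then have bounded: "bounded (f ` K)" by (rule compact_imp_bounded)
  have "f z \<in> f ` K" for z
  proof -
    define s where "s = Im (w2 * cnj z) / Im (w2 * cnj w1)"
    define t where "t = - Im (w1 * cnj z) / Im (w2 * cnj w1)"
    have z: "z = of_real s * w1 + of_real t * w2"
      unfolding s_def t_def by (rule lattice_coordinates[OF lat])
    define z' where "z' = z + of_int (- \<lfloor>s\<rfloor>) * w1 + of_int (- \<lfloor>t\<rfloor>) * w2"
    have "f z' = f z" unfolding z'_def by (rule periodic_add_lattice[OF per])
    moreover have "z' = g (frac s, frac t)"
      unfolding z'_def g_def z by (simp add: frac_def algebra_simps)
    moreover have "(frac s, frac t) \<in> {0..1} \<times> {0..1}"
      using frac_ge_0 frac_lt_1 less_imp_le by auto
    ultimately show ?thesis unfolding K_def by (metis image_eqI)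
  qed
  then have "range f \<subseteq> f ` K" by blast
  then show ?thesis by (rule bounded_subset[OF bounded])
qed

lemma linear_eq_mult_if_Cauchy_Riemann:
  fixes L :: "complex \<Rightarrow> complex"
  assumes "linear L" "L \<i> = \<i> * L 1"
  shows "L h = h * L 1"
proof -
  have "h = Re h *\<^sub>R 1 + Im h *\<^sub>R \<i>" by (simp add: complex_eq_iff)
  then have "L h = L (Re h *\<^sub>R 1 + Im h *\<^sub>R \<i>)" by (rule arg_cong)
  also have "\<dots> = Re h *\<^sub>R L 1 + Im h *\<^sub>R L \<i>" using assms(1) by (simp add: linear_add linear_scale)
  also have "\<dots> = h * L 1" using assms(2) by (simp add: scaleR_conv_of_real complex_eq_iff algebra_simps)
  finally show ?thesis .
qed

text \<open>Liouville: the equation says that \<psi> is holomorphic, and periodicity makes it bounded.\<close>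
lemma periodic_Cauchy_Riemann_imp_constant:
  fixes \<psi> :: "complex \<Rightarrow> complex"
  assumes lat: "is_lattice w1 w2" and sm: "smooth \<psi>" and per: "periodic w1 w2 \<psi>"
    and CR: "\<And>z. pdx \<psi> z + \<i> * pdy \<psi> z = 0"
  shows "\<exists>b. \<forall>z. \<psi> z = b"
proof -
  have "\<psi> field_differentiable (at z)" for z
  proof -
    define L where "L = frechet_derivative \<psi> (at z)"
    have d: "(\<psi> has_derivative L) (at z)" unfolding L_def by (rule smooth_has_derivative[OF sm])
    have "L 1 + \<i> * L \<i> = 0" using CR[of z] has_derivative_pdx[OF d] has_derivative_pdy[OF d] by simp
    then have "\<i> * (\<i> * L \<i>) = \<i> * (- L 1)" by (simp add: add_eq_0_iff)
    then have "L \<i> = \<i> * L 1" by simp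
    then have "L = (\<lambda>h. L 1 * h)"
      using linear_eq_mult_if_Cauchy_Riemann[OF has_derivative_linear[OF d]] by (metis mult.commute)
    then show ?thesis using d by (metis field_differentiable_def has_field_derivative_def)
  qed
  then have "\<psi> holomorphic_on UNIV" using field_differentiable_at_within holomorphic_on_def by blast
  moreover have "bounded (range \<psi>)" using bounded_range_periodic[OF lat smooth_continuous_on[OF sm] per] .
  ultimately have "\<psi> constant_on UNIV" by (rule Liouville_theorem)
  then show ?thesis by (auto simp: constant_on_def)
qed

lemma pdx_pdy_zero_imp_constant:
  fixes h :: "complex \<Rightarrow> complex"
  assumes sm: "smooth h" and "\<And>z. pdx h z = 0" "\<And>z. pdy h z = 0"
  shows "\<exists>c. \<forall>z. h z = c"
proof -
  have "(h has_derivative (\<lambda>v. 0)) (at z within UNIV)" for z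
  proof -
    define L where "L = frechet_derivative h (at z)"
    have d: "(h has_derivative L) (at z)" unfolding L_def by (rule smooth_has_derivative[OF sm])
    have "L 1 = 0" "L \<i> = 0" using assms has_derivative_pdx[OF d] has_derivative_pdy[OF d] by metis+
    then have "L = (\<lambda>v. 0)"
      using linear_eq_mult_if_Cauchy_Riemann[OF has_derivative_linear[OF d]] by (metis mult_zero_right)
    then show ?thesis using d by simp
  qed
  then show ?thesis using has_derivative_zero_constant[of UNIV h] by auto
qed

section \<open>Generating polynomials of symmetric tensor fields\<close>

text \<open>The rank k field f at z as the binary form f(\<xi>, ..., \<xi>) evaluated at \<xi> = (1, t).\<close>
definition gen_poly :: "nat \<Rightarrow> (nat \<Rightarrow> complex \<Rightarrow> complex) \<Rightarrow> complex \<Rightarrow> complex poly" where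
  "gen_poly k f z = (\<Sum>j\<le>k. monom (of_nat (k choose j) * f j z) j)"

lemma coeff_gen_poly: "coeff (gen_poly k f z) n = (if n \<le> k then of_nat (k choose n) * f n z else 0)"
  unfolding gen_poly_def by (simp add: coeff_sum coeff_monom)

lemma poly_gen_poly: "poly (gen_poly k f z) t = (\<Sum>j\<le>k. of_nat (k choose j) * f j z * t ^ j)"
  unfolding gen_poly_def by (simp add: poly_sum poly_monom)

lemma gen_poly_eq_iff: "gen_poly k f z = gen_poly k g z \<longleftrightarrow> (\<forall>j\<le>k. f j z = g j z)"
proof
  assume "gen_poly k f z = gen_poly k g z"
  then have "coeff (gen_poly k f z) j = coeff (gen_poly k g z) j" for j by simp
  then show "\<forall>j\<le>k. f j z = g j z"
  proof (intro allI impI)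
    fix j assume j: "j \<le> k" and h: "\<And>j. coeff (gen_poly k f z) j = coeff (gen_poly k g z) j"
    have "of_nat (k choose j) * f j z = of_nat (k choose j) * g j z" using h[of j] j by (simp add: coeff_gen_poly)
    moreover have "(of_nat (k choose j) :: complex) \<noteq> 0" using j by simp
    ultimately show "f j z = g j z" by simp
  qed
next
  assume "\<forall>j\<le>k. f j z = g j z" then show "gen_poly k f z = gen_poly k g z"
    by (intro poly_eqI) (simp add: coeff_gen_poly)
qed

lemma gen_poly_add: "gen_poly k (\<lambda>j z. f j z + g j z) z = gen_poly k f z + gen_poly k g z"
  by (rule poly_eqI) (simp add: coeff_gen_poly algebra_simps)
lemma gen_poly_diff: "gen_poly k (\<lambda>j z. f j z - g j z) z = gen_poly k f z - gen_poly k g z"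
  by (rule poly_eqI) (simp add: coeff_gen_poly algebra_simps)
lemma gen_poly_cmult: "gen_poly k (\<lambda>j z. c z * f j z) z = smult (c z) (gen_poly k f z)"
  by (rule poly_eqI) (simp add: coeff_gen_poly algebra_simps)
lemma gen_poly_sum: "gen_poly k (\<lambda>j z. \<Sum>i<n. F i j z) z = (\<Sum>i<n. gen_poly k (F i) z)"
  by (rule poly_eqI) (simp add: coeff_gen_poly coeff_sum sum_distrib_left)

lemma gen_poly_of_nat_diff_mult:
  "gen_poly k (\<lambda>j z. of_nat (k - j) * f j z) z = smult (of_nat k) (gen_poly (k - 1) f z)"
proof (rule poly_eqI)
  fix n
  have "of_nat (k choose n) * (of_nat (k - n) :: complex) = of_nat k * of_nat ((k - 1) choose n)"
    using binomial_absorb_comp[of k n] by (metis of_nat_mult mult.commute)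
  then show "coeff (gen_poly k (\<lambda>j z. of_nat (k - j) * f j z) z) n =
      coeff (smult (of_nat k) (gen_poly (k - 1) f z)) n"
    by (cases "n \<le> k - 1"; cases "n \<le> k") (auto simp: coeff_gen_poly mult.assoc[symmetric] binomial_eq_0)
qed

lemma gen_poly_of_nat_mult_shift:
  "gen_poly k (\<lambda>j z. of_nat j * f (j - 1) z) z = smult (of_nat k) (pCons 0 (gen_poly (k - 1) f z))"
proof (rule poly_eqI)
  fix n
  show "coeff (gen_poly k (\<lambda>j z. of_nat j * f (j - 1) z) z) n =
      coeff (smult (of_nat k) (pCons 0 (gen_poly (k - 1) f z))) n"
  proof (cases n)
    case 0 then show ?thesis by (simp add: coeff_gen_poly)
  next
    case (Suc n')
    have "of_nat (k choose Suc n') * (of_nat (Suc n') :: complex) = of_nat k * of_nat ((k - 1) choose n')"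
      using binomial_absorption[of n' k] by (metis of_nat_mult mult.commute)
    then show ?thesis using Suc
      by (cases "n' \<le> k - 1"; cases "Suc n' \<le> k")
        (auto simp: coeff_gen_poly mult.assoc[symmetric] binomial_eq_0)
  qed
qed

lemma pderiv_gen_poly: "pderiv (gen_poly k f z) = smult (of_nat k) (gen_poly (k - 1) (\<lambda>j. f (j + 1)) z)"
proof (rule poly_eqI)
  fix n
  have "of_nat (k choose Suc n) * (of_nat (Suc n) :: complex) = of_nat k * of_nat ((k - 1) choose n)"
    using binomial_absorption[of n k] by (metis of_nat_mult mult.commute)
  then show "coeff (pderiv (gen_poly k f z)) n = coeff (smult (of_nat k) (gen_poly (k - 1) (\<lambda>j. f (j + 1)) z)) n"
    by (cases "n \<le> k - 1"; cases "Suc n \<le> k")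
      (auto simp: coeff_gen_poly coeff_pderiv mult.assoc[symmetric] binomial_eq_0 mult.commute mult.left_commute)
qed

lemma gen_poly_split:
  "1 \<le> k \<Longrightarrow> gen_poly k f z = gen_poly (k - 1) f z + pCons 0 (gen_poly (k - 1) (\<lambda>j. f (j + 1)) z)"
proof (rule poly_eqI)
  fix n assume k: "1 \<le> k"
  show "coeff (gen_poly k f z) n = coeff (gen_poly (k - 1) f z + pCons 0 (gen_poly (k - 1) (\<lambda>j. f (j + 1)) z)) n"
  proof (cases n)
    case 0 then show ?thesis by (simp add: coeff_gen_poly)
  next
    case (Suc n')
    have "(k choose (Suc n')) = ((k - 1) choose (Suc n')) + ((k - 1) choose n')"
    proof -
      obtain k' where "k = Suc k'" using k by (cases k) auto
      then show ?thesis by simp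
    qed
    then show ?thesis using Suc k
      by (cases "Suc n' \<le> k - 1"; cases "Suc n' \<le> k") (auto simp: coeff_gen_poly distrib_right binomial_eq_0)
  qed
qed

lemma gen_poly_dsym:
  "gen_poly (k + 1) (dsym mu k f) z = gen_poly k (nab mu k f 1) z + pCons 0 (gen_poly k (nab mu k f 2) z)"
proof (rule poly_eqI)
  fix n
  show "coeff (gen_poly (k + 1) (dsym mu k f) z) n = coeff (gen_poly k (nab mu k f 1) z + pCons 0 (gen_poly k (nab mu k f 2) z)) n"
  proof (cases n)
    case 0
    have "(1 + of_nat k :: complex) \<noteq> 0" by (metis add.commute of_nat_Suc of_nat_neq_0)
    then show ?thesis using 0 by (simp add: coeff_gen_poly dsym_def)
  next
    case (Suc n')
    have e1: "of_nat (Suc k choose Suc n') * of_nat (Suc k - Suc n') / (of_nat (Suc k) :: complex) = of_nat (k choose Suc n')"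
    proof -
      have "(Suc k - Suc n') * (Suc k choose Suc n') = Suc k * (k choose Suc n')"
        using binomial_absorb_comp[of "Suc k" "Suc n'"] by simp
      then have "of_nat (Suc k choose Suc n') * of_nat (Suc k - Suc n') = (of_nat (Suc k) :: complex) * of_nat (k choose Suc n')"
        by (metis of_nat_mult mult.commute)
      then show ?thesis by (simp add: field_simps del: of_nat_Suc)
    qed
    have e2: "of_nat (Suc k choose Suc n') * of_nat (Suc n') / (of_nat (Suc k) :: complex) = of_nat (k choose n')"
    proof -
      have "Suc n' * (Suc k choose Suc n') = Suc k * (k choose n')"
        using binomial_absorption[of n' "Suc k"] by simp
      then have "of_nat (Suc k choose Suc n') * of_nat (Suc n') = (of_nat (Suc k) :: complex) * of_nat (k choose n')"
        by (metis of_nat_mult mult.commute)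
      then show ?thesis by (simp add: field_simps del: of_nat_Suc)
    qed
    show ?thesis
    proof (cases "n' \<le> k")
      case True
      have "coeff (gen_poly (k + 1) (dsym mu k f) z) n =
         of_nat (Suc k choose Suc n') * (of_nat (Suc k - Suc n') * nab mu k f 1 (Suc n') z + of_nat (Suc n') * nab mu k f 2 n' z) / of_nat (Suc k)"
        using True Suc by (simp add: coeff_gen_poly dsym_def)
      also have "\<dots> = (of_nat (Suc k choose Suc n') * of_nat (Suc k - Suc n') / of_nat (Suc k)) * nab mu k f 1 (Suc n') z
          + (of_nat (Suc k choose Suc n') * of_nat (Suc n') / of_nat (Suc k)) * nab mu k f 2 n' z"
        by (simp add: field_simps del: of_nat_Suc)
      also have "\<dots> = of_nat (k choose Suc n') * nab mu k f 1 (Suc n') z + of_nat (k choose n') * nab mu k f 2 n' z"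
        by (simp only: e1 e2)
      finally show ?thesis using Suc True by (auto simp: coeff_gen_poly binomial_eq_0)
    next
      case False then show ?thesis using Suc by (simp add: coeff_gen_poly)
    qed
  qed
qed

lemma pdx_pdy_poly_gen_poly:
  assumes "\<forall>j\<le>k. smooth (f j)"
  shows "pdx (\<lambda>z. poly (gen_poly k f z) t) z = poly (gen_poly k (\<lambda>j. pdx (f j)) z) t"
    and "pdy (\<lambda>z. poly (gen_poly k f z) t) z = poly (gen_poly k (\<lambda>j. pdy (f j)) z) t"
proof -
  have d: "((\<lambda>z. \<Sum>j\<le>k. of_nat (k choose j) * f j z * t ^ j) has_derivative
      (\<lambda>h. \<Sum>j\<le>k. of_nat (k choose j) * frechet_derivative (f j) (at z) h * t ^ j)) (at z)"
    by (intro has_derivative_sum has_derivative_mult_right has_derivative_mult_left smooth_has_derivative)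
       (use assms in auto)
  show "pdx (\<lambda>z. poly (gen_poly k f z) t) z = poly (gen_poly k (\<lambda>j. pdx (f j)) z) t"
    unfolding poly_gen_poly using has_derivative_pdx[OF d] by (simp add: pdx_def)
  show "pdy (\<lambda>z. poly (gen_poly k f z) t) z = poly (gen_poly k (\<lambda>j. pdy (f j)) z) t"
    unfolding poly_gen_poly using has_derivative_pdy[OF d] by (simp add: pdy_def)
qed

lemma gen_poly_nab:
  "gen_poly k (nab mu k f i) z = gen_poly k (\<lambda>j. pd (f j) i) z
   - smult (of_nat k) (smult (of_real (chr mu 1 i 1 z)) (gen_poly (k - 1) f z)
       + smult (of_real (chr mu 2 i 1 z)) (gen_poly (k - 1) (\<lambda>j. f (j + 1)) z))
   - smult (of_nat k) (pCons 0 (smult (of_real (chr mu 1 i 2 z)) (gen_poly (k - 1) f z)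
       + smult (of_real (chr mu 2 i 2 z)) (gen_poly (k - 1) (\<lambda>j. f (j + 1)) z)))"
proof -
  define a where "a = (\<lambda>z. complex_of_real (chr mu 1 i 1 z))"
  define b where "b = (\<lambda>z. complex_of_real (chr mu 2 i 1 z))"
  define c where "c = (\<lambda>z. complex_of_real (chr mu 1 i 2 z))"
  define d where "d = (\<lambda>z. complex_of_real (chr mu 2 i 2 z))"
  have nab: "nab mu k f i = (\<lambda>j z. pd (f j) i z - of_nat (k - j) * (a z * f j z + b z * f (j + 1) z)
       - of_nat j * ((\<lambda>j z. c z * f j z + d z * f (j + 1) z) (j - 1) z))"
  proof (intro ext)
    fix j z show "nab mu k f i j z = pd (f j) i z - of_nat (k - j) * (a z * f j z + b z * f (j + 1) z)
       - of_nat j * ((\<lambda>j z. c z * f j z + d z * f (j + 1) z) (j - 1) z)"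
      by (cases j) (simp_all add: nab_def a_def b_def c_def d_def)
  qed
  have "gen_poly k (nab mu k f i) z = gen_poly k (\<lambda>j. pd (f j) i) z
      - gen_poly k (\<lambda>j z. of_nat (k - j) * (a z * f j z + b z * f (j + 1) z)) z
      - gen_poly k (\<lambda>j z. of_nat j * ((\<lambda>j z. c z * f j z + d z * f (j + 1) z) (j - 1) z)) z"
    unfolding nab by (simp only: gen_poly_diff)
  also have "gen_poly k (\<lambda>j z. of_nat (k - j) * (a z * f j z + b z * f (j + 1) z)) z
      = smult (of_nat k) (smult (a z) (gen_poly (k - 1) f z) + smult (b z) (gen_poly (k - 1) (\<lambda>j. f (j + 1)) z))"
    using gen_poly_of_nat_diff_mult[of k "\<lambda>j z. a z * f j z + b z * f (j + 1) z" z]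
    by (simp add: gen_poly_add gen_poly_cmult)
  also have "gen_poly k (\<lambda>j z. of_nat j * ((\<lambda>j z. c z * f j z + d z * f (j + 1) z) (j - 1) z)) z
      = smult (of_nat k) (pCons 0 (smult (c z) (gen_poly (k - 1) f z) + smult (d z) (gen_poly (k - 1) (\<lambda>j. f (j + 1)) z)))"
    using gen_poly_of_nat_mult_shift[of k "\<lambda>j z. c z * f j z + d z * f (j + 1) z" z]
    by (simp add: gen_poly_add gen_poly_cmult)
  finally show ?thesis by (simp add: a_def b_def c_def d_def)
qed

lemma poly_gen_poly_pred:
  "of_nat k * poly (gen_poly (k - 1) f z) t = of_nat k * poly (gen_poly k f z) t - t * poly (pderiv (gen_poly k f z)) t"
proof (cases "k = 0")
  case True then show ?thesis by (simp add: pderiv_gen_poly)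
next
  case False
  have "poly (gen_poly k f z) t = poly (gen_poly (k - 1) f z) t + t * poly (gen_poly (k - 1) (\<lambda>j. f (j + 1)) z) t"
    using gen_poly_split[of k f z] False by simp
  then show ?thesis by (simp add: pderiv_gen_poly algebra_simps)
qed
lemma poly_gen_poly_dsym:
  assumes "\<forall>j\<le>k. smooth (f j)"
  shows "poly (gen_poly (k + 1) (dsym mu k f) z) t =
     pdx (\<lambda>z. poly (gen_poly k f z) t) z + t * pdy (\<lambda>z. poly (gen_poly k f z) t) z
     - of_nat k * (of_real (pdx mu z) * (1 - t^2) + 2 * t * of_real (pdy mu z)) * poly (gen_poly k f z) t
     - (1 + t^2) * (t * of_real (pdx mu z) - of_real (pdy mu z)) * poly (pderiv (gen_poly k f z)) t"
proof -
  define P where "P = poly (gen_poly k f z) t"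
  define Pd where "Pd = poly (pderiv (gen_poly k f z)) t"
  define P1 where "P1 = poly (gen_poly (k - 1) f z) t"
  define P2 where "P2 = poly (gen_poly (k - 1) (\<lambda>j. f (j + 1)) z) t"
  define mx where "mx = complex_of_real (pdx mu z)"
  define my where "my = complex_of_real (pdy mu z)"
  have e1: "of_nat k * P1 = of_nat k * P - t * Pd" unfolding P1_def P_def Pd_def by (rule poly_gen_poly_pred)
  have e2: "of_nat k * P2 = Pd" unfolding P2_def Pd_def by (simp add: pderiv_gen_poly)
  have c: "complex_of_real (chr mu 1 1 1 z) = mx" "complex_of_real (chr mu 2 1 1 z) = - my"
     "complex_of_real (chr mu 1 1 2 z) = my" "complex_of_real (chr mu 2 1 2 z) = mx"
     "complex_of_real (chr mu 1 2 1 z) = my" "complex_of_real (chr mu 2 2 1 z) = mx"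
     "complex_of_real (chr mu 1 2 2 z) = - mx" "complex_of_real (chr mu 2 2 2 z) = my"
    by (simp_all add: chr_def pd_def mx_def my_def)
  have pd1: "gen_poly k (\<lambda>j. pd (f j) 1) z = gen_poly k (\<lambda>j. pdx (f j)) z" by (simp add: pd_def)
  have pd2: "gen_poly k (\<lambda>j. pd (f j) 2) z = gen_poly k (\<lambda>j. pdy (f j)) z" by (simp add: pd_def)
  have "poly (gen_poly (k + 1) (dsym mu k f) z) t =
     poly (gen_poly k (\<lambda>j. pdx (f j)) z) t - (mx * (of_nat k * P1) - my * (of_nat k * P2))
       - t * (my * (of_nat k * P1) + mx * (of_nat k * P2))
     + t * (poly (gen_poly k (\<lambda>j. pdy (f j)) z) t - (my * (of_nat k * P1) + mx * (of_nat k * P2))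
       - t * (- mx * (of_nat k * P1) + my * (of_nat k * P2)))"
    unfolding gen_poly_dsym gen_poly_nab pd1 pd2 c P1_def P2_def by (simp add: algebra_simps)
  also have "\<dots> = poly (gen_poly k (\<lambda>j. pdx (f j)) z) t + t * poly (gen_poly k (\<lambda>j. pdy (f j)) z) t
     - of_nat k * (mx * (1 - t^2) + 2 * t * my) * P - (1 + t^2) * (t * mx - my) * Pd"
    unfolding e1 e2 by (simp add: algebra_simps power2_eq_square)
  finally show ?thesis using pdx_pdy_poly_gen_poly[OF assms] by (simp add: P_def Pd_def mx_def my_def)
qed

lemma sum_if_add_eq:
  assumes "finite N" "finite A" "finite B" "\<And>a b. a \<in> A \<Longrightarrow> b \<in> B \<Longrightarrow> a + b \<in> N"
  shows "(\<Sum>n\<in>N. \<Sum>a\<in>A. \<Sum>b\<in>B. if a + b = n then f a b else (0::'c::comm_monoid_add)) = (\<Sum>a\<in>A. \<Sum>b\<in>B. f a b)"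
proof -
  have "(\<Sum>n\<in>N. \<Sum>a\<in>A. \<Sum>b\<in>B. if a + b = n then f a b else 0) = (\<Sum>a\<in>A. \<Sum>n\<in>N. \<Sum>b\<in>B. if a + b = n then f a b else 0)"
    by (rule sum.swap)
  also have "\<dots> = (\<Sum>a\<in>A. \<Sum>b\<in>B. \<Sum>n\<in>N. if a + b = n then f a b else 0)"
    by (rule sum.cong[OF refl], rule sum.swap)
  also have "\<dots> = (\<Sum>a\<in>A. \<Sum>b\<in>B. f a b)"
    using assms by (intro sum.cong refl) (simp add: sum.delta)
  finally show ?thesis .
qed

lemma gen_poly_sprod: "gen_poly (k + l) (sprod k l u v) z = gen_poly k u z * gen_poly l v z"
proof -
  have "poly (gen_poly (k + l) (sprod k l u v) z) t = poly (gen_poly k u z * gen_poly l v z) t" for t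
  proof -
    have "poly (gen_poly (k + l) (sprod k l u v) z) t = (\<Sum>n\<le>k+l. \<Sum>a\<le>k. \<Sum>b\<le>l.
          if a + b = n then of_nat (k choose a) * of_nat (l choose b) * u a z * v b z * t ^ (a + b) else 0)"
      unfolding poly_gen_poly sprod_def
      by (intro sum.cong refl) (auto simp: sum_distrib_right intro!: sum.cong)
    also have "\<dots> = (\<Sum>a\<le>k. \<Sum>b\<le>l. of_nat (k choose a) * of_nat (l choose b) * u a z * v b z * t ^ (a + b))"
      by (rule sum_if_add_eq) auto
    also have "\<dots> = poly (gen_poly k u z * gen_poly l v z) t"
      unfolding poly_mult poly_gen_poly sum_product by (intro sum.cong refl) (simp add: power_add algebra_simps)
    finally show ?thesis .
  qed
  then show ?thesis by (simp add: poly_eq_poly_eq_iff[symmetric] fun_eq_iff)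
qed

lemma poly_gen_poly_powers_i:
  assumes "\<forall>j\<le>k. h j z = \<gamma> * (- \<i>) ^ j + \<delta> * \<i> ^ j"
  shows "poly (gen_poly k h z) t = \<gamma> * (1 - \<i> * t) ^ k + \<delta> * (1 + \<i> * t) ^ k"
proof -
  have "(1 - \<i> * t) ^ k = ((- \<i>) * t + 1) ^ k" by simp
  also have "\<dots> = (\<Sum>j\<le>k. of_nat (k choose j) * ((- \<i>) * t) ^ j * 1 ^ (k - j))" by (rule binomial_ring)
  also have "\<dots> = (\<Sum>j\<le>k. of_nat (k choose j) * ((- \<i>) ^ j * t ^ j))"
    by (simp only: power_mult_distrib power_one mult_1_right)
  finally have 1: "(1 - \<i> * t) ^ k = (\<Sum>j\<le>k. of_nat (k choose j) * ((- \<i>) ^ j * t ^ j))" .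
  have "(1 + \<i> * t) ^ k = (\<i> * t + 1) ^ k" by (simp add: add.commute)
  also have "\<dots> = (\<Sum>j\<le>k. of_nat (k choose j) * (\<i> * t) ^ j * 1 ^ (k - j))" by (rule binomial_ring)
  also have "\<dots> = (\<Sum>j\<le>k. of_nat (k choose j) * (\<i> ^ j * t ^ j))"
    by (simp only: power_mult_distrib power_one mult_1_right)
  finally have 2: "(1 + \<i> * t) ^ k = (\<Sum>j\<le>k. of_nat (k choose j) * (\<i> ^ j * t ^ j))" .
  show ?thesis unfolding 1 2 poly_gen_poly sum_distrib_left sum.distrib[symmetric]
    using assms by (intro sum.cong refl) (simp add: algebra_simps)
qed

lemma smooth_poly_gen_poly: "\<forall>j\<le>k. smooth (f j) \<Longrightarrow> smooth (\<lambda>z. poly (gen_poly k f z) t)"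
  unfolding poly_gen_poly by (intro smooth_sum) (auto intro!: smooth_mult smooth_const)

lemma degree_gen_poly: "degree (gen_poly k f z) \<le> k"
  by (rule degree_le) (simp add: coeff_gen_poly)

lemma gen_poly_rank_0: "gen_poly 0 Q z = [:Q 0 z:]"
  by (simp add: gen_poly_def monom_0)

lemma poly_gen_poly_eq_0_iff: "(\<forall>t. poly (gen_poly k f z) t = 0) \<longleftrightarrow> (\<forall>j\<le>k. f j z = 0)"
proof -
  have "(\<forall>t. poly (gen_poly k f z) t = 0) \<longleftrightarrow> gen_poly k f z = gen_poly k (\<lambda>j z. 0) z"
    by (simp add: poly_eq_poly_eq_iff[symmetric] fun_eq_iff poly_gen_poly)
  then show ?thesis by (simp add: gen_poly_eq_iff)
qed

lemma dsym_eq_0_iff: "dsym mu k f = (\<lambda>j z. 0) \<longleftrightarrow> (\<forall>z t. poly (gen_poly (k + 1) (dsym mu k f) z) t = 0)"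
  unfolding poly_gen_poly_eq_0_iff by (auto simp: fun_eq_iff dsym_def)

section \<open>Tensor fields on the torus\<close>

lemma smooth_sprod:
  assumes "\<forall>a\<le>k. smooth (u a)" "\<forall>b\<le>l. smooth (v b)"
  shows "smooth (sprod k l u v j)"
proof (cases "j \<le> k + l")
  case True
  have e: "sprod k l u v j = (\<lambda>z. (\<Sum>a\<le>k. \<Sum>b\<le>l. if a + b = j then of_nat (k choose a) * of_nat (l choose b) * u a z * v b z else 0)
     * (1 / of_nat ((k + l) choose j)))"
    using True by (simp add: sprod_def fun_eq_iff)
  show ?thesis unfolding e using assms
    by (intro smooth_mult smooth_const smooth_sum) (auto intro!: smooth_if smooth_mult smooth_const)
next
  case False
  have "sprod k l u v j = (\<lambda>z. 0)" using False by (simp add: sprod_def fun_eq_iff)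
  then show ?thesis by (simp add: smooth_const)
qed

lemma tfield_smooth: "tfield w1 w2 k f \<Longrightarrow> smooth (f j)"
  unfolding tfield_def by (cases "j \<le> k") (auto simp: smooth_const)
lemma tfield_periodic: "tfield w1 w2 k f \<Longrightarrow> periodic w1 w2 (f j)"
  unfolding tfield_def by (cases "j \<le> k") (auto simp: periodic_def)

lemma periodic_sprod:
  assumes "\<forall>a. periodic w1 w2 (u a)" "\<forall>b. periodic w1 w2 (v b)"
  shows "periodic w1 w2 (sprod k l u v j)"
proof -
  have 1: "\<And>a z. u a (z + w1) = u a z" "\<And>a z. u a (z + w2) = u a z"
    "\<And>b z. v b (z + w1) = v b z" "\<And>b z. v b (z + w2) = v b z"
    using assms by (auto simp: periodic_def)
  have 2: "sprod k l u v j (z + w) = sprod k l u v j z"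
    if "\<And>a. u a (z + w) = u a z" "\<And>b. v b (z + w) = v b z" for z w
    unfolding sprod_def using that by (intro if_cong refl arg_cong2[where f = "(/)"] sum.cong) auto
  show ?thesis unfolding periodic_def using 2 1 by blast
qed

lemma tfield_sprod:
  assumes "tfield w1 w2 k u" "tfield w1 w2 l v"
  shows "tfield w1 w2 (k + l) (sprod k l u v)"
  unfolding tfield_def
proof (intro conjI allI impI)
  fix j
  show "smooth (sprod k l u v j)" using assms by (intro smooth_sprod) (auto intro: tfield_smooth)
  show "periodic w1 w2 (sprod k l u v j)" using assms by (intro periodic_sprod) (auto intro: tfield_periodic)
next
  fix j assume "k + l < j" then show "sprod k l u v j = (\<lambda>z. 0)" by (simp add: sprod_def fun_eq_iff)
qed

lemma tfield_add: "tfield w1 w2 k f \<Longrightarrow> tfield w1 w2 k h \<Longrightarrow> tfield w1 w2 k (\<lambda>j z. f j z + h j z)"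
  unfolding tfield_def by (auto intro: smooth_add simp: periodic_def)

lemma pd_add:
  assumes "smooth f" "smooth h"
  shows "pd (\<lambda>z. f z + h z) i z = pd f i z + pd h i z"
proof -
  have d: "((\<lambda>z. f z + h z) has_derivative (\<lambda>v. frechet_derivative f (at z) v + frechet_derivative h (at z) v)) (at z)"
    by (intro has_derivative_add smooth_has_derivative assms)
  show ?thesis using has_derivative_pdx[OF d] has_derivative_pdy[OF d] by (simp add: pd_def pdx_def pdy_def)
qed

lemma nab_add:
  assumes "\<forall>j. smooth (f j)" "\<forall>j. smooth (h j)"
  shows "nab mu k (\<lambda>j z. f j z + h j z) i j z = nab mu k f i j z + nab mu k h i j z"
  unfolding nab_def using pd_add[of "f j" "h j" i z] assms by (simp add: algebra_simps)

lemma dsym_add: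
  assumes "\<forall>j. smooth (f j)" "\<forall>j. smooth (h j)"
  shows "dsym mu k (\<lambda>j z. f j z + h j z) = (\<lambda>j z. dsym mu k f j z + dsym mu k h j z)"
  by (simp add: fun_eq_iff dsym_def nab_add[OF assms] distrib_left add_divide_distrib)

section \<open>The metric and the trace-free fields\<close>

lemma poly_gen_poly_metric_tensor:
  "poly (gen_poly 2 (metric_tensor mu) z) t = of_real (exp (2 * mu z)) * (1 + t^2)"
  by (simp add: poly_gen_poly metric_tensor_def numeral_2_eq_2 algebra_simps)

lemma poly_pderiv_gen_poly_metric_tensor:
  "poly (pderiv (gen_poly 2 (metric_tensor mu) z)) t = 2 * of_real (exp (2 * mu z)) * t"
  by (simp add: pderiv_gen_poly poly_gen_poly metric_tensor_def numeral_2_eq_2 algebra_simps)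

lemma gen_poly_metric_tensor:
  "gen_poly 2 (metric_tensor mu) z = smult (of_real (exp (2 * mu z))) [:1, 0, 1:]"
  by (simp add: poly_eq_poly_eq_iff[symmetric] fun_eq_iff poly_gen_poly_metric_tensor
      algebra_simps power2_eq_square)

lemma smooth_metric_tensor: "smooth mu \<Longrightarrow> smooth (metric_tensor mu j)"
  unfolding metric_tensor_def
  by (cases "j = 0 \<or> j = 2") (auto intro!: smooth_exp_mult[of mu 2, simplified] smooth_const)

lemma tfield_metric_tensor:
  assumes "smooth mu" "periodic w1 w2 mu"
  shows "tfield w1 w2 2 (metric_tensor mu)"
  using assms smooth_metric_tensor[OF assms(1)] unfolding tfield_def
  by (auto simp: metric_tensor_def periodic_def fun_eq_iff)

lemma killing_metric_tensor:
  assumes mu: "smooth mu" and "periodic w1 w2 mu"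
  shows "killing w1 w2 mu 2 (metric_tensor mu)"
proof -
  have "poly (gen_poly (2 + 1) (dsym mu 2 (metric_tensor mu)) z) t = 0" for z t
  proof -
    define E where "E = complex_of_real (exp (2 * mu z))"
    define x where "x = complex_of_real (pdx mu z)"
    define y where "y = complex_of_real (pdy mu z)"
    have g: "(\<lambda>z. poly (gen_poly 2 (metric_tensor mu) z) t) = (\<lambda>z. of_real (exp (2 * mu z)) * (1 + t^2))"
      by (simp add: poly_gen_poly_metric_tensor)
    have dE: "(\<lambda>z. complex_of_real (exp (2 * mu z))) differentiable (at z)"
      by (rule smooth_differentiable[OF smooth_exp_mult[OF mu]])
    have Px: "pdx (\<lambda>z. poly (gen_poly 2 (metric_tensor mu) z) t) z = E * (2 * x) * (1 + t^2)"
      and Py: "pdy (\<lambda>z. poly (gen_poly 2 (metric_tensor mu) z) t) z = E * (2 * y) * (1 + t^2)"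
      unfolding g pdx_pdy_mult[OF dE differentiable_const] pdx_pdy_exp_mult[OF mu]
      by (simp_all add: has_derivative_pdx[OF has_derivative_const]
          has_derivative_pdy[OF has_derivative_const] E_def x_def y_def)
    have sm: "\<forall>j\<le>2. smooth (metric_tensor mu j)" using smooth_metric_tensor[OF mu] by blast
    have "poly (gen_poly (2 + 1) (dsym mu 2 (metric_tensor mu)) z) t =
       E * (2 * x) * (1 + t^2) + t * (E * (2 * y) * (1 + t^2))
       - of_nat 2 * (x * (1 - t^2) + 2 * t * y) * (E * (1 + t^2)) - (1 + t^2) * (t * x - y) * (2 * E * t)"
      unfolding poly_gen_poly_dsym[OF sm] Px Py
      unfolding poly_gen_poly_metric_tensor poly_pderiv_gen_poly_metric_tensor E_def x_def y_def ..
    also have "\<dots> = 0" by (simp add: algebra_simps power2_eq_square)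
    finally show ?thesis .
  qed
  then show ?thesis
    unfolding killing_def using tfield_metric_tensor[OF assms] dsym_eq_0_iff by fastforce
qed

text \<open>The metric is parallel, so multiplying by it commutes with d (up to its generating polynomial).\<close>
lemma poly_gen_poly_dsym_metric_prod:
  assumes mu: "smooth mu" and Q: "\<forall>j\<le>k. smooth (Q j)"
  shows "poly (gen_poly (k + 2 + 1) (dsym mu (k + 2) (sprod 2 k (metric_tensor mu) Q)) z) t =
     of_real (exp (2 * mu z)) * (1 + t^2) * poly (gen_poly (k + 1) (dsym mu k Q) z) t"
proof -
  define E where "E = complex_of_real (exp (2 * mu z))"
  define x where "x = complex_of_real (pdx mu z)"
  define y where "y = complex_of_real (pdy mu z)"
  define PQ where "PQ = (\<lambda>z. poly (gen_poly k Q z) t)"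
  define G where "G = sprod 2 k (metric_tensor mu) Q"
  have gG: "gen_poly (k + 2) G z = gen_poly 2 (metric_tensor mu) z * gen_poly k Q z" for z
    using gen_poly_sprod[of 2 k "metric_tensor mu" Q z] by (simp add: G_def add.commute)
  have g: "(\<lambda>z. poly (gen_poly (k + 2) G z) t) = (\<lambda>z. of_real (exp (2 * mu z)) * ((1 + t^2) * PQ z))"
    by (simp only: gG poly_mult poly_gen_poly_metric_tensor PQ_def mult.assoc)
  have dE: "(\<lambda>z. complex_of_real (exp (2 * mu z))) differentiable (at z)"
    by (rule smooth_differentiable[OF smooth_exp_mult[OF mu]])
  have dQ: "PQ differentiable (at z)"
    unfolding PQ_def by (rule smooth_differentiable[OF smooth_poly_gen_poly[OF Q]])
  have Px: "pdx (\<lambda>z. poly (gen_poly (k + 2) G z) t) z = E * ((1 + t^2) * pdx PQ z) + E * (2 * x) * ((1 + t^2) * PQ z)"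
    and Py: "pdy (\<lambda>z. poly (gen_poly (k + 2) G z) t) z = E * ((1 + t^2) * pdy PQ z) + E * (2 * y) * ((1 + t^2) * PQ z)"
    unfolding g pdx_pdy_mult[OF dE differentiable_mult[OF differentiable_const dQ]]
      pdx_pdy_cmult[OF dQ] pdx_pdy_exp_mult[OF mu]
    by (simp_all add: E_def x_def y_def)
  have P: "poly (gen_poly (k + 2) G z) t = E * (1 + t^2) * PQ z"
    by (simp only: gG poly_mult poly_gen_poly_metric_tensor PQ_def E_def)
  have P': "poly (pderiv (gen_poly (k + 2) G z)) t =
      E * (1 + t^2) * poly (pderiv (gen_poly k Q z)) t + PQ z * (2 * E * t)"
    unfolding gG pderiv_mult poly_add poly_mult poly_gen_poly_metric_tensor
      poly_pderiv_gen_poly_metric_tensor by (simp add: PQ_def E_def)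
  have G: "\<forall>j\<le>k + 2. smooth (G j)"
    unfolding G_def using smooth_sprod smooth_metric_tensor[OF mu] Q by blast
  have "poly (gen_poly (k + 2 + 1) (dsym mu (k + 2) G) z) t =
     (E * ((1 + t^2) * pdx PQ z) + E * (2 * x) * ((1 + t^2) * PQ z))
     + t * (E * ((1 + t^2) * pdy PQ z) + E * (2 * y) * ((1 + t^2) * PQ z))
     - of_nat (k + 2) * (x * (1 - t^2) + 2 * t * y) * (E * (1 + t^2) * PQ z)
     - (1 + t^2) * (t * x - y) * (E * (1 + t^2) * poly (pderiv (gen_poly k Q z)) t + PQ z * (2 * E * t))"
    unfolding poly_gen_poly_dsym[OF G] Px Py P P' x_def y_def ..
  also have "\<dots> = E * (1 + t^2) * (pdx PQ z + t * pdy PQ z - of_nat k * (x * (1 - t^2) + 2 * t * y) * PQ z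
       - (1 + t^2) * (t * x - y) * poly (pderiv (gen_poly k Q z)) t)"
    by (simp add: algebra_simps power2_eq_square)
  also have "\<dots> = E * (1 + t^2) * poly (gen_poly (k + 1) (dsym mu k Q) z) t"
    unfolding poly_gen_poly_dsym[OF Q] PQ_def x_def y_def ..
  finally show ?thesis by (simp add: G_def E_def)
qed

text \<open>The symmetrised derivatives of these fields are exactly the fields g Z^{m-1,c}.\<close>
definition trace_free_field :: "(complex \<Rightarrow> real) \<Rightarrow> nat \<Rightarrow> complex \<Rightarrow> complex \<Rightarrow> nat \<Rightarrow> complex \<Rightarrow> complex" where
  "trace_free_field mu m \<alpha> \<beta> j z =
     (if j \<le> m then of_real (exp (2 * real m * mu z)) * (\<alpha> * (- \<i>) ^ j + \<beta> * \<i> ^ j) else 0)"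

lemma smooth_trace_free_field: "smooth mu \<Longrightarrow> smooth (trace_free_field mu m \<alpha> \<beta> j)"
  unfolding trace_free_field_def
  by (cases "j \<le> m") (auto intro!: smooth_mult smooth_exp_mult smooth_const)

lemma tfield_trace_free_field:
  assumes "smooth mu" "periodic w1 w2 mu"
  shows "tfield w1 w2 m (trace_free_field mu m \<alpha> \<beta>)"
  using assms smooth_trace_free_field[OF assms(1)] unfolding tfield_def
  by (auto simp: trace_free_field_def periodic_def fun_eq_iff)

lemma poly_gen_poly_trace_free_field:
  "poly (gen_poly m (trace_free_field mu m \<alpha> \<beta>) z) t =
     of_real (exp (2 * real m * mu z)) * (\<alpha> * (1 - \<i> * t) ^ m + \<beta> * (1 + \<i> * t) ^ m)"
  by (subst poly_gen_poly_powers_i[of m _ z "of_real (exp (2 * real m * mu z)) * \<alpha>"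
        "of_real (exp (2 * real m * mu z)) * \<beta>"])
     (auto simp: trace_free_field_def algebra_simps)

lemma poly_pderiv_gen_poly_trace_free_field:
  assumes "1 \<le> m"
  shows "poly (pderiv (gen_poly m (trace_free_field mu m \<alpha> \<beta>) z)) t =
    of_nat m * of_real (exp (2 * real m * mu z)) *
    (- \<i> * \<alpha> * (1 - \<i> * t) ^ (m - 1) + \<i> * \<beta> * (1 + \<i> * t) ^ (m - 1))"
proof -
  have h1: "poly (gen_poly (m - 1) (\<lambda>j. trace_free_field mu m \<alpha> \<beta> (j + 1)) z) t =
      (of_real (exp (2 * real m * mu z)) * (- \<i> * \<alpha>)) * (1 - \<i> * t) ^ (m - 1)
    + (of_real (exp (2 * real m * mu z)) * (\<i> * \<beta>)) * (1 + \<i> * t) ^ (m - 1)"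
    by (rule poly_gen_poly_powers_i) (use assms in \<open>auto simp: trace_free_field_def algebra_simps\<close>)
  have h2: "poly (pderiv (gen_poly m (trace_free_field mu m \<alpha> \<beta>) z)) t =
      of_nat m * poly (gen_poly (m - 1) (\<lambda>j. trace_free_field mu m \<alpha> \<beta> (j + 1)) z) t"
    by (simp only: pderiv_gen_poly poly_smult)
  show ?thesis unfolding h2 h1 by (simp add: algebra_simps)
qed

lemma Zfield_eq_powers_i:
  fixes mu :: "complex \<Rightarrow> real" and k j :: nat and z c1 c2 :: complex
  defines "e \<equiv> complex_of_real (exp (2 * real k * mu z))"
    and "x \<equiv> complex_of_real (pdx mu z)" and "y \<equiv> complex_of_real (pdy mu z)"
  assumes "j \<le> k"
  shows "Zfield mu k c1 c2 j z = e / 2 * (c1 + \<i> * c2) * (x - \<i> * y) * (- \<i>) ^ j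
                                + e / 2 * (c1 - \<i> * c2) * (x + \<i> * y) * \<i> ^ j"
proof -
  define \<gamma> where "\<gamma> = e / 2 * (c1 + \<i> * c2) * (x - \<i> * y)"
  define \<delta> where "\<delta> = e / 2 * (c1 - \<i> * c2) * (x + \<i> * y)"
  have even: "\<gamma> + \<delta> = e * (c1 * x + c2 * y)"
    unfolding \<gamma>_def \<delta>_def by (simp add: field_simps complex_eq_iff)
  have odd: "\<gamma> * (- \<i>) + \<delta> * \<i> = e * (c2 * x - c1 * y)"
    unfolding \<gamma>_def \<delta>_def by (simp add: field_simps complex_eq_iff)
  obtain q where "j = 2 * q \<or> j = 2 * q + 1"
    by (metis even_two_times_div_two odd_two_times_div_two_succ)
  then have "\<gamma> * (- \<i>) ^ j + \<delta> * \<i> ^ j = Zfield mu k c1 c2 j z"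
  proof
    assume j: "j = 2 * q"
    then have "(- \<i>) ^ j = (-1) ^ q" "\<i> ^ j = (-1) ^ q" by (simp_all add: power_mult)
    then have "\<gamma> * (- \<i>) ^ j + \<delta> * \<i> ^ j = (-1) ^ q * (\<gamma> + \<delta>)"
      by (simp add: algebra_simps)
    also have "\<dots> = Zfield mu k c1 c2 j z"
      unfolding even using assms(4) j by (simp add: Zfield_def e_def x_def y_def)
    finally show ?thesis .
  next
    assume j: "j = 2 * q + 1"
    then have "(- \<i>) ^ j = (-1) ^ q * (- \<i>)" "\<i> ^ j = (-1) ^ q * \<i>"
      by (simp_all add: power_mult power_add)
    then have "\<gamma> * (- \<i>) ^ j + \<delta> * \<i> ^ j = (-1) ^ q * (\<gamma> * (- \<i>) + \<delta> * \<i>)"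
      by (simp add: algebra_simps)
    also have "\<dots> = Zfield mu k c1 c2 j z"
      unfolding odd using assms(4) j by (simp add: Zfield_def e_def x_def y_def)
    finally show ?thesis .
  qed
  then show ?thesis unfolding \<gamma>_def \<delta>_def by simp
qed

lemma poly_gen_poly_Zfield:
  "poly (gen_poly k (Zfield mu k c1 c2) z) t =
      of_real (exp (2 * real k * mu z)) / 2 * (c1 + \<i> * c2) * (of_real (pdx mu z) - \<i> * of_real (pdy mu z))
        * (1 - \<i> * t) ^ k
    + of_real (exp (2 * real k * mu z)) / 2 * (c1 - \<i> * c2) * (of_real (pdx mu z) + \<i> * of_real (pdy mu z))
        * (1 + \<i> * t) ^ k"
  by (intro poly_gen_poly_powers_i allI impI Zfield_eq_powers_i)

lemma poly_gen_poly_dsym_trace_free_field: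
  assumes mu: "smooth mu" and m: "1 \<le> m"
  shows "poly (gen_poly (m + 1) (dsym mu m (trace_free_field mu m \<alpha> \<beta>)) z) t =
     of_real (exp (2 * real m * mu z)) * of_nat m * (1 + t^2) *
     (\<alpha> * (of_real (pdx mu z) - \<i> * of_real (pdy mu z)) * (1 - \<i> * t) ^ (m - 1)
      + \<beta> * (of_real (pdx mu z) + \<i> * of_real (pdy mu z)) * (1 + \<i> * t) ^ (m - 1))"
proof -
  define x where "x = complex_of_real (pdx mu z)"
  define y where "y = complex_of_real (pdy mu z)"
  define E where "E = complex_of_real (exp (2 * real m * mu z))"
  define u where "u = (1 - \<i> * t) ^ (m - 1)"
  define v where "v = (1 + \<i> * t) ^ (m - 1)"
  define U where "U = \<alpha> * ((1 - \<i> * t) * u) + \<beta> * ((1 + \<i> * t) * v)"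
  have A: "poly (gen_poly m (trace_free_field mu m \<alpha> \<beta>) z) t = of_real (exp (2 * real m * mu z)) * U" for z
  proof -
    obtain m' where "m = Suc m'" using m by (cases m) auto
    then show ?thesis unfolding poly_gen_poly_trace_free_field U_def u_def v_def by simp
  qed
  have dE: "(\<lambda>z. complex_of_real (exp ((2 * real m) * mu z))) differentiable (at z)"
    by (rule smooth_differentiable[OF smooth_exp_mult[OF mu]])
  have Px: "pdx (\<lambda>z. poly (gen_poly m (trace_free_field mu m \<alpha> \<beta>) z) t) z = E * (2 * of_nat m * x) * U"
    and Py: "pdy (\<lambda>z. poly (gen_poly m (trace_free_field mu m \<alpha> \<beta>) z) t) z = E * (2 * of_nat m * y) * U"
    unfolding A pdx_pdy_mult[OF dE differentiable_const] pdx_pdy_exp_mult[OF mu]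
    by (simp_all add: has_derivative_pdx[OF has_derivative_const]
        has_derivative_pdy[OF has_derivative_const] E_def x_def y_def)
  have P': "poly (pderiv (gen_poly m (trace_free_field mu m \<alpha> \<beta>) z)) t =
      of_nat m * E * (- \<i> * \<alpha> * u + \<i> * \<beta> * v)"
    using poly_pderiv_gen_poly_trace_free_field[OF m] by (simp add: E_def u_def v_def)
  have sm: "\<forall>j\<le>m. smooth (trace_free_field mu m \<alpha> \<beta> j)"
    using smooth_trace_free_field[OF mu] by blast
  have "poly (gen_poly (m + 1) (dsym mu m (trace_free_field mu m \<alpha> \<beta>)) z) t =
      E * (2 * of_nat m * x) * U + t * (E * (2 * of_nat m * y) * U)
      - of_nat m * (x * (1 - t^2) + 2 * t * y) * (E * U)
      - (1 + t^2) * (t * x - y) * (of_nat m * E * (- \<i> * \<alpha> * u + \<i> * \<beta> * v))"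
    unfolding poly_gen_poly_dsym[OF sm] Px Py P' unfolding A E_def x_def y_def ..
  also have "\<dots> = E * of_nat m * (1 + t^2) * (\<alpha> * (x - \<i> * y) * u + \<beta> * (x + \<i> * y) * v)"
    unfolding U_def by (simp add: algebra_simps power2_eq_square)
  finally show ?thesis unfolding E_def u_def v_def x_def y_def .
qed

lemma poly_gen_poly_dsym_trace_free_field_eq_Zfield:
  assumes mu: "smooth mu" and m: "1 \<le> m"
  shows "poly (gen_poly (m + 1) (dsym mu m (trace_free_field mu m \<alpha> \<beta>)) z) t =
     of_real (exp (2 * mu z)) * (1 + t^2) *
     poly (gen_poly (m - 1) (Zfield mu (m - 1) (of_nat m * (\<alpha> + \<beta>)) (- \<i> * of_nat m * (\<alpha> - \<beta>))) z) t"
proof -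
  have e: "complex_of_real (exp (2 * real m * mu z)) =
      of_real (exp (2 * mu z)) * of_real (exp (2 * real (m - 1) * mu z))"
  proof -
    have "2 * real m * mu z = 2 * mu z + 2 * real (m - 1) * mu z"
      using m by (simp add: of_nat_diff algebra_simps)
    then show ?thesis by (metis exp_add of_real_mult)
  qed
  have c: "of_nat m * (\<alpha> + \<beta>) + \<i> * (- \<i> * of_nat m * (\<alpha> - \<beta>)) = 2 * of_nat m * \<alpha>"
    "of_nat m * (\<alpha> + \<beta>) - \<i> * (- \<i> * of_nat m * (\<alpha> - \<beta>)) = 2 * of_nat m * \<beta>"
    by (simp_all add: algebra_simps)
  show ?thesis
    unfolding poly_gen_poly_dsym_trace_free_field[OF mu m] poly_gen_poly_Zfield c e
    by (simp add: algebra_simps)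
qed

section \<open>Killing fields at the isotropic directions\<close>

lemma poly_gen_poly_dsym_at_i:
  assumes "\<forall>j\<le>k. smooth (f j)"
  shows "poly (gen_poly (k + 1) (dsym mu k f) z) \<i> =
     pdx (\<lambda>z. poly (gen_poly k f z) \<i>) z + \<i> * pdy (\<lambda>z. poly (gen_poly k f z) \<i>) z
     - of_nat k * (2 * of_real (pdx mu z) + 2 * \<i> * of_real (pdy mu z)) * poly (gen_poly k f z) \<i>"
  using poly_gen_poly_dsym[OF assms, of mu z \<i>] by (simp add: power2_eq_square algebra_simps)

text \<open>For a Killing field the function exp(-2 m mu) P(i) satisfies the Cauchy-Riemann equations,
  so by Liouville it is constant on the torus.\<close>
lemma killing_poly_gen_poly_at_i:
  assumes lat: "is_lattice w1 w2" and mu: "smooth mu" "periodic w1 w2 mu"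
    and K: "killing w1 w2 mu m f"
  obtains b where "\<And>z. poly (gen_poly m f z) \<i> = of_real (exp (2 * real m * mu z)) * b"
proof -
  have sf: "\<forall>j\<le>m. smooth (f j)" and pf: "\<forall>j. periodic w1 w2 (f j)"
    using K tfield_smooth tfield_periodic unfolding killing_def by blast+
  define P where "P = (\<lambda>z. poly (gen_poly m f z) \<i>)"
  define E where "E = (\<lambda>z. complex_of_real (exp ((- 2 * real m) * mu z)))"
  define \<psi> where "\<psi> = (\<lambda>z. E z * P z)"
  have sP: "smooth P" unfolding P_def by (rule smooth_poly_gen_poly[OF sf])
  have sE: "smooth E" unfolding E_def by (rule smooth_exp_mult[OF mu(1)])
  have "pdx \<psi> z + \<i> * pdy \<psi> z = 0" for z
  proof -
    have "pdx \<psi> z + \<i> * pdy \<psi> z = E z * (pdx P z + \<i> * pdy P z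
            - of_nat m * (2 * of_real (pdx mu z) + 2 * \<i> * of_real (pdy mu z)) * P z)"
      unfolding \<psi>_def pdx_pdy_mult[OF smooth_differentiable[OF sE] smooth_differentiable[OF sP]]
      unfolding E_def pdx_pdy_exp_mult[OF mu(1)] by (simp add: algebra_simps)
    also have "\<dots> = E z * poly (gen_poly (m + 1) (dsym mu m f) z) \<i>"
      unfolding poly_gen_poly_dsym_at_i[OF sf] P_def ..
    also have "\<dots> = 0" using K by (simp add: killing_def gen_poly_def)
    finally show ?thesis .
  qed
  moreover have "smooth \<psi>" unfolding \<psi>_def by (rule smooth_mult[OF sE sP])
  moreover have "periodic w1 w2 \<psi>"
    using pf mu(2) unfolding \<psi>_def E_def P_def periodic_def by (simp add: poly_gen_poly)
  ultimately obtain b where b: "\<And>z. \<psi> z = b"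
    using periodic_Cauchy_Riemann_imp_constant[OF lat] by blast
  have "P z = of_real (exp (2 * real m * mu z)) * b" for z
  proof -
    have "complex_of_real (exp (2 * real m * mu z)) * E z = 1"
      unfolding E_def by (simp flip: of_real_mult exp_add)
    then show ?thesis using b[of z] unfolding \<psi>_def by (metis mult.assoc mult_1)
  qed
  then show ?thesis using that unfolding P_def by blast
qed

lemma poly_gen_poly_conj_at_i:
  assumes "real_field f"
  shows "poly (gen_poly k f z) (- \<i>) = cnj (poly (gen_poly k f z) \<i>)"
proof -
  have "cnj (f j z) = f j z" for j using assms unfolding real_field_def by (simp add: complex_eq_iff)
  then show ?thesis by (simp add: poly_gen_poly)
qed

lemma poly_gen_poly_trace_free_field_at_i:
  assumes "1 \<le> m"
  shows "poly (gen_poly m (trace_free_field mu m \<alpha> \<beta>) z) \<i> = of_real (exp (2 * real m * mu z)) * \<alpha> * 2 ^ m"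
    and "poly (gen_poly m (trace_free_field mu m \<alpha> \<beta>) z) (- \<i>) = of_real (exp (2 * real m * mu z)) * \<beta> * 2 ^ m"
  using assms by (simp_all add: poly_gen_poly_trace_free_field power_0_left)

lemma poly_gen_poly_metric_prod_at_i:
  "poly (gen_poly (k + 2) (sprod 2 k (metric_tensor mu) Q) z) \<i> = 0"
  "poly (gen_poly (k + 2) (sprod 2 k (metric_tensor mu) Q) z) (- \<i>) = 0"
  using gen_poly_sprod[of 2 k "metric_tensor mu" Q z]
  by (simp_all add: add.commute poly_gen_poly_metric_tensor)

lemma poly_gen_poly_sum_sprod:
  assumes "\<forall>i<n. ku i + kv i = m"
  shows "poly (gen_poly m (\<lambda>j z. \<Sum>i<n. sprod (ku i) (kv i) (u i) (v i) j z) z) t =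
    (\<Sum>i<n. poly (gen_poly (ku i) (u i) z) t * poly (gen_poly (kv i) (v i) z) t)"
proof -
  have "gen_poly m (\<lambda>j z. \<Sum>i<n. sprod (ku i) (kv i) (u i) (v i) j z) z =
      (\<Sum>i<n. gen_poly m (sprod (ku i) (kv i) (u i) (v i)) z)"
    by (rule gen_poly_sum)
  also have "\<dots> = (\<Sum>i<n. gen_poly (ku i) (u i) z * gen_poly (kv i) (v i) z)"
    using assms by (intro sum.cong refl) (metis lessThan_iff gen_poly_sprod)
  finally show ?thesis by (simp add: poly_sum)
qed

text \<open>Induction on the rank: a reducible Killing field is a sum of products whose factors vanish at
  i and -i by induction, or a multiple of the metric.\<close>
lemma killing_poly_gen_poly_at_i_eq_0:
  assumes H: "\<forall>k. 1 \<le> k \<and> k \<le> m - 1 \<longrightarrow> \<not> (\<exists>f. irreducible_killing w1 w2 mu k f)"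
  shows "1 \<le> k \<Longrightarrow> k \<le> m - 1 \<Longrightarrow> killing w1 w2 mu k h \<Longrightarrow>
      poly (gen_poly k h z) \<i> = 0 \<and> poly (gen_poly k h z) (- \<i>) = 0"
proof (induction k arbitrary: h z rule: less_induct)
  case (less k)
  with H have "\<not> irreducible_killing w1 w2 mu k h" by blast
  with less.prems(3) have "(\<exists>(n::nat) ku kv u v.
      (\<forall>i<n. 0 < ku i \<and> 0 < kv i \<and> ku i + kv i = k \<and>
             killing w1 w2 mu (ku i) (u i) \<and> killing w1 w2 mu (kv i) (v i)) \<and>
      h = (\<lambda>j z. \<Sum>i<n. sprod (ku i) (kv i) (u i) (v i) j z))
    \<or> (k = 2 \<and> (\<exists>c. h = (\<lambda>j z. c * metric_tensor mu j z)))"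
    unfolding irreducible_killing_def by blast
  then show ?case
  proof (elim disjE exE conjE)
    fix n :: nat and ku kv u v
    assume prod: "\<forall>i<n. 0 < ku i \<and> 0 < kv i \<and> ku i + kv i = k \<and>
             killing w1 w2 mu (ku i) (u i) \<and> killing w1 w2 mu (kv i) (v i)"
      and h: "h = (\<lambda>j z. \<Sum>i<n. sprod (ku i) (kv i) (u i) (v i) j z)"
    have "poly (gen_poly (ku i) (u i) z) \<i> = 0 \<and> poly (gen_poly (ku i) (u i) z) (- \<i>) = 0"
      if "i < n" for i
      using prod that less.prems by (intro less.IH) auto
    then show ?thesis using prod unfolding h by (simp add: poly_gen_poly_sum_sprod)
  next
    fix c assume "k = 2" "h = (\<lambda>j z. c * metric_tensor mu j z)"
    then have "gen_poly k h z = smult c (gen_poly 2 (metric_tensor mu) z)"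
      using gen_poly_cmult[of 2 "\<lambda>z. c" "metric_tensor mu" z] by simp
    then show ?thesis by (simp add: poly_gen_poly_metric_tensor)
  qed
qed

section \<open>Dividing by the metric\<close>

lemma one_plus_sq_dvd:
  fixes p :: "complex poly"
  assumes "poly p \<i> = 0" "poly p (- \<i>) = 0"
  shows "[:1, 0, 1:] dvd p"
proof -
  from assms(1) have "[:- \<i>, 1:] dvd p" by (simp add: poly_eq_0_iff_dvd)
  then obtain p1 where p1: "p = [:- \<i>, 1:] * p1" by (erule dvdE)
  have "poly p1 (- \<i>) = 0" using assms(2) p1 by simp
  then have "[:- (- \<i>), 1:] dvd p1" by (simp only: poly_eq_0_iff_dvd)
  then obtain p2 where p2: "p1 = [:\<i>, 1:] * p2" by (auto elim: dvdE)
  have "[:- \<i>, 1:] * [:\<i>, 1:] = [:1, 0, 1::complex:]" by (simp add: mult_pCons_left)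
  then have "p = [:1, 0, 1:] * p2" unfolding p1 p2 by (metis mult.assoc)
  then show ?thesis by (rule dvdI)
qed

lemma all_poly_mult_one_plus_sq_eq_0_iff:
  fixes p :: "complex poly" and c :: complex
  assumes "c \<noteq> 0"
  shows "(\<forall>t. c * (1 + t^2) * poly p t = 0) \<longleftrightarrow> (\<forall>t. poly p t = 0)"
proof
  assume "\<forall>t. c * (1 + t^2) * poly p t = 0"
  then have "poly (smult c [:1, 0, 1:] * p) = poly 0"
    by (simp add: fun_eq_iff algebra_simps power2_eq_square)
  then have "smult c [:1, 0, 1:] * p = 0" by (simp only: poly_eq_poly_eq_iff)
  moreover have "smult c [:1, 0, 1:] \<noteq> 0" using assms by simp
  ultimately show "\<forall>t. poly p t = 0" using mult_eq_0_iff by (metis poly_0)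
qed simp

text \<open>Coefficients of the quotient by 1 + t^2, solving coeff r (n + 2) = coeff q (n + 2) + coeff q n.\<close>
fun quot_one_plus_sq :: "(nat \<Rightarrow> 'a::ab_group_add) \<Rightarrow> nat \<Rightarrow> 'a" where
  "quot_one_plus_sq c 0 = c 0"
| "quot_one_plus_sq c (Suc 0) = c (Suc 0)"
| "quot_one_plus_sq c (Suc (Suc n)) = c (Suc (Suc n)) - quot_one_plus_sq c n"

lemma coeff_eq_quot_one_plus_sq:
  fixes q :: "'a::comm_ring_1 poly"
  shows "coeff q n = quot_one_plus_sq (coeff ([:1, 0, 1:] * q)) n"
proof -
  have "[:1, 0, 1:] * q = q + pCons 0 (pCons 0 q)" by (simp add: mult_pCons_left)
  then show ?thesis by (induction n rule: nat_induct2) (simp_all add: coeff_pCons)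
qed

lemma smooth_quot_one_plus_sq:
  "(\<And>n. smooth (c n)) \<Longrightarrow> smooth (\<lambda>z. quot_one_plus_sq (\<lambda>n. c n z) n)"
  by (induction n rule: nat_induct2) (simp_all add: smooth_diff)

lemma field_eqI_gen_poly:
  assumes "\<forall>j>k. f j = (\<lambda>z. 0)" "\<forall>j>k. h j = (\<lambda>z. 0)" "\<And>z. gen_poly k f z = gen_poly k h z"
  shows "f = h"
proof (intro ext)
  fix j z
  show "f j z = h j z"
    using assms gen_poly_eq_iff[of k f z h] by (cases "j \<le> k") auto
qed

lemma gen_poly_eq_one_plus_sq_mult:
  assumes "\<And>z. poly (gen_poly (k + 2) f z) \<i> = 0" "\<And>z. poly (gen_poly (k + 2) f z) (- \<i>) = 0"
  obtains q where "\<And>z. gen_poly (k + 2) f z = [:1, 0, 1:] * q z" "\<And>z j. k < j \<Longrightarrow> coeff (q z) j = 0"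
proof -
  define q where "q z = gen_poly (k + 2) f z div [:1, 0, 1:]" for z
  have fq: "gen_poly (k + 2) f z = [:1, 0, 1:] * q z" for z
    unfolding q_def by (rule dvd_mult_div_cancel[symmetric], rule one_plus_sq_dvd[OF assms])
  have "degree (q z) \<le> k" for z
  proof (cases "q z = 0")
    case False
    then have "degree (gen_poly (k + 2) f z) = 2 + degree (q z)"
      unfolding fq by (subst degree_mult_eq) simp_all
    then show ?thesis using degree_gen_poly[of "k + 2" f z] by simp
  qed simp
  then have "coeff (q z) j = 0" if "k < j" for j z
    using that by (meson coeff_eq_0 le_less_trans)
  then show ?thesis using that fq by blast
qed

text \<open>A field whose generating polynomial vanishes at i and -i is divisible by 1 + t^2, i.e. by the
  metric; the smooth cofactor is read off from the coefficients.\<close>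
lemma tfield_eq_metric_prod:
  assumes mu: "smooth mu" "periodic w1 w2 mu" and f: "tfield w1 w2 (k + 2) f"
    and roots: "\<And>z. poly (gen_poly (k + 2) f z) \<i> = 0" "\<And>z. poly (gen_poly (k + 2) f z) (- \<i>) = 0"
  obtains Q where "tfield w1 w2 k Q" "f = sprod 2 k (metric_tensor mu) Q"
proof -
  obtain q where fq: "\<And>z. gen_poly (k + 2) f z = [:1, 0, 1:] * q z"
    and q_high: "\<And>z j. k < j \<Longrightarrow> coeff (q z) j = 0"
    using gen_poly_eq_one_plus_sq_mult[OF roots] by blast
  define c where "c n z = coeff (gen_poly (k + 2) f z) n" for n z
  define Q where "Q j z = (if j \<le> k then
      of_real (exp (- 2 * mu z)) * quot_one_plus_sq (\<lambda>n. c n z) j / of_nat (k choose j) else 0)" for j z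
  have "smooth (c n)" "periodic w1 w2 (c n)" for n
    using f unfolding c_def coeff_gen_poly tfield_def
    by (auto intro!: smooth_if smooth_mult smooth_const simp: periodic_def)
  moreover have "smooth (\<lambda>z. complex_of_real (exp (- (2 * mu z))))"
    using smooth_exp_mult[OF mu(1), of "- 2"] by simp
  ultimately have "tfield w1 w2 k Q"
    using mu unfolding tfield_def Q_def[abs_def] periodic_def
    by (auto intro!: smooth_if smooth_mult smooth_quot_one_plus_sq smooth_const simp: divide_inverse)
  moreover have "f = sprod 2 k (metric_tensor mu) Q"
  proof (rule field_eqI_gen_poly[where k = "k + 2"])
    fix z
    have "gen_poly k Q z = smult (of_real (exp (- 2 * mu z))) (q z)"
    proof (rule poly_eqI)
      fix n
      have "quot_one_plus_sq (\<lambda>n. c n z) n = coeff (q z) n"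
        unfolding c_def fq by (rule coeff_eq_quot_one_plus_sq[symmetric])
      then show "coeff (gen_poly k Q z) n = coeff (smult (of_real (exp (- 2 * mu z))) (q z)) n"
        by (simp add: coeff_gen_poly Q_def q_high)
    qed
    then have "gen_poly (k + 2) (sprod 2 k (metric_tensor mu) Q) z =
        smult (of_real (exp (2 * mu z)) * of_real (exp (- 2 * mu z))) ([:1, 0, 1:] * q z)"
      using gen_poly_sprod[of 2 k "metric_tensor mu" Q z] unfolding gen_poly_metric_tensor
      by (simp only: add.commute mult_smult_left mult_smult_right smult_smult mult.commute)
    also have "of_real (exp (2 * mu z)) * of_real (exp (- 2 * mu z)) = (1 :: complex)"
      by (simp flip: of_real_mult exp_add)
    finally show "gen_poly (k + 2) f z = gen_poly (k + 2) (sprod 2 k (metric_tensor mu) Q) z"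
      unfolding fq by simp
  qed (use f in \<open>auto simp: tfield_def sprod_def fun_eq_iff\<close>)
  ultimately show ?thesis using that by blast
qed

section \<open>Killing fields built from trace-free fields and the metric\<close>

lemma dsym_eq_0_iff_metric_factor:
  assumes "\<forall>j>k. h j = (\<lambda>z. 0)"
    and "\<And>z t. poly (gen_poly (k + 1 + 1) (dsym mu (k + 1) f) z) t =
                of_real (exp (2 * mu z)) * (1 + t^2) * poly (gen_poly k h z) t"
  shows "dsym mu (k + 1) f = (\<lambda>j z. 0) \<longleftrightarrow> h = (\<lambda>j z. 0)"
proof -
  have "(\<forall>t. of_real (exp (2 * mu z)) * (1 + t^2) * poly (gen_poly k h z) t = 0) \<longleftrightarrow>
      (\<forall>t. poly (gen_poly k h z) t = 0)" for z
    by (rule all_poly_mult_one_plus_sq_eq_0_iff) simp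
  then have "dsym mu (k + 1) f = (\<lambda>j z. 0) \<longleftrightarrow> (\<forall>z t. poly (gen_poly k h z) t = 0)"
    by (simp only: dsym_eq_0_iff assms(2))
  also have "\<dots> \<longleftrightarrow> h = (\<lambda>j z. 0)"
    unfolding poly_gen_poly_eq_0_iff using assms(1) by (auto simp: fun_eq_iff) (metis not_le)
  finally show ?thesis .
qed

lemma dsym_trace_free_field_rank_1_eq_0_iff:
  assumes "smooth mu"
  shows "dsym mu 1 (trace_free_field mu 1 \<alpha> \<beta>) = (\<lambda>j z. 0) \<longleftrightarrow>
    Zfield mu 0 (\<alpha> + \<beta>) (- \<i> * (\<alpha> - \<beta>)) = (\<lambda>j z. 0)"
proof -
  have "\<forall>j>0. Zfield mu 0 (\<alpha> + \<beta>) (- \<i> * (\<alpha> - \<beta>)) j = (\<lambda>z. 0)"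
    by (simp add: Zfield_def fun_eq_iff)
  moreover have "poly (gen_poly (0 + 1 + 1) (dsym mu (0 + 1) (trace_free_field mu 1 \<alpha> \<beta>)) z) t =
      of_real (exp (2 * mu z)) * (1 + t^2) * poly (gen_poly 0 (Zfield mu 0 (\<alpha> + \<beta>) (- \<i> * (\<alpha> - \<beta>))) z) t"
    for z t
    using poly_gen_poly_dsym_trace_free_field_eq_Zfield[OF assms order.refl, of \<alpha> \<beta> z t] by simp
  ultimately show ?thesis using dsym_eq_0_iff_metric_factor by fastforce
qed

lemma Zfield_uminus: "Zfield mu k (- c1) (- c2) = (\<lambda>j z. - Zfield mu k c1 c2 j z)"
  by (simp add: Zfield_def fun_eq_iff algebra_simps)

text \<open>The trace-free part contributes g Z, the metric part g dQ.\<close>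
lemma dsym_trace_free_add_metric_prod_eq_0_iff:
  assumes mu: "smooth mu" and Q: "\<forall>j. smooth (Q j)"
  shows "dsym mu (k + 2)
           (\<lambda>j z. trace_free_field mu (k + 2) \<alpha> \<beta> j z + sprod 2 k (metric_tensor mu) Q j z) = (\<lambda>j z. 0)
     \<longleftrightarrow> dsym mu k Q = Zfield mu (k + 1) (- (of_nat (k + 2) * (\<alpha> + \<beta>))) (- (- \<i> * of_nat (k + 2) * (\<alpha> - \<beta>)))"
proof -
  define Z where "Z = Zfield mu (k + 1) (of_nat (k + 2) * (\<alpha> + \<beta>)) (- \<i> * of_nat (k + 2) * (\<alpha> - \<beta>))"
  have sA: "\<forall>j. smooth (trace_free_field mu (k + 2) \<alpha> \<beta> j)"
    using smooth_trace_free_field[OF mu] by blast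
  have sG: "\<forall>j. smooth (sprod 2 k (metric_tensor mu) Q j)"
    using smooth_sprod smooth_metric_tensor[OF mu] Q by blast
  have "\<forall>j>k + 1. (\<lambda>z. Z j z + dsym mu k Q j z) = (\<lambda>z. 0)"
    by (simp add: Z_def Zfield_def dsym_def fun_eq_iff)
  moreover have "poly (gen_poly (k + 1 + 1 + 1) (dsym mu (k + 1 + 1)
          (\<lambda>j z. trace_free_field mu (k + 2) \<alpha> \<beta> j z + sprod 2 k (metric_tensor mu) Q j z)) z) t =
        of_real (exp (2 * mu z)) * (1 + t^2) * poly (gen_poly (k + 1) (\<lambda>j z. Z j z + dsym mu k Q j z) z) t"
    for z t
  proof -
    have "poly (gen_poly (k + 2 + 1) (dsym mu (k + 2) (trace_free_field mu (k + 2) \<alpha> \<beta>)) z) t =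
        of_real (exp (2 * mu z)) * (1 + t^2) * poly (gen_poly (k + 1) Z z) t"
      using poly_gen_poly_dsym_trace_free_field_eq_Zfield[OF mu, of "k + 2" \<alpha> \<beta> z t]
      by (simp add: Z_def)
    then show ?thesis
      using poly_gen_poly_dsym_metric_prod[OF mu, of k Q z t] Q
      unfolding dsym_add[OF sA sG] gen_poly_add poly_add
      by (simp add: distrib_left numeral_2_eq_2)
  qed
  ultimately have "dsym mu (k + 2)
           (\<lambda>j z. trace_free_field mu (k + 2) \<alpha> \<beta> j z + sprod 2 k (metric_tensor mu) Q j z) = (\<lambda>j z. 0)
      \<longleftrightarrow> (\<lambda>j z. Z j z + dsym mu k Q j z) = (\<lambda>j z. 0)"
    using dsym_eq_0_iff_metric_factor[of "k + 1"] by (simp add: numeral_2_eq_2)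
  also have "\<dots> \<longleftrightarrow> dsym mu k Q = Zfield mu (k + 1) (- (of_nat (k + 2) * (\<alpha> + \<beta>))) (- (- \<i> * of_nat (k + 2) * (\<alpha> - \<beta>)))"
    unfolding Zfield_uminus Z_def by (auto simp: fun_eq_iff add_eq_0_iff)
  finally show ?thesis .
qed

lemma tfield_diff: "tfield w1 w2 k f \<Longrightarrow> tfield w1 w2 k h \<Longrightarrow> tfield w1 w2 k (\<lambda>j z. f j z - h j z)"
  unfolding tfield_def by (auto intro: smooth_diff simp: periodic_def)

lemma tfield_rank_1_eqI:
  assumes "tfield w1 w2 1 f" "tfield w1 w2 1 h"
    and "\<And>z. poly (gen_poly 1 f z) \<i> = poly (gen_poly 1 h z) \<i>"
    and "\<And>z. poly (gen_poly 1 f z) (- \<i>) = poly (gen_poly 1 h z) (- \<i>)"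
  shows "f = h"
proof (rule field_eqI_gen_poly[where k = 1])
  fix z
  have "f 0 z + \<i> * f 1 z = h 0 z + \<i> * h 1 z" "f 0 z - \<i> * f 1 z = h 0 z - \<i> * h 1 z"
    using assms(3,4)[of z] by (simp_all add: poly_gen_poly algebra_simps)
  then have "f 0 z = h 0 z" "f 1 z = h 1 z" by (simp_all add: complex_eq_iff)
  then show "gen_poly 1 f z = gen_poly 1 h z" by (simp add: gen_poly_eq_iff le_Suc_eq)
qed (use assms in \<open>auto simp: tfield_def\<close>)

lemma tfield_eq_trace_free_add_metric_prod:
  assumes mu: "smooth mu" "periodic w1 w2 mu" and f: "tfield w1 w2 (k + 2) f"
    and "\<And>z. poly (gen_poly (k + 2) f z) \<i> = poly (gen_poly (k + 2) (trace_free_field mu (k + 2) \<alpha> \<beta>) z) \<i>"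
    and "\<And>z. poly (gen_poly (k + 2) f z) (- \<i>) = poly (gen_poly (k + 2) (trace_free_field mu (k + 2) \<alpha> \<beta>) z) (- \<i>)"
  obtains Q where "tfield w1 w2 k Q"
    "f = (\<lambda>j z. trace_free_field mu (k + 2) \<alpha> \<beta> j z + sprod 2 k (metric_tensor mu) Q j z)"
proof -
  define A where "A = trace_free_field mu (k + 2) \<alpha> \<beta>"
  have "tfield w1 w2 (k + 2) (\<lambda>j z. f j z - A j z)"
    unfolding A_def by (rule tfield_diff[OF f tfield_trace_free_field[OF mu]])
  moreover have "poly (gen_poly (k + 2) (\<lambda>j z. f j z - A j z) z) \<i> = 0"
    "poly (gen_poly (k + 2) (\<lambda>j z. f j z - A j z) z) (- \<i>) = 0" for z
    using assms(4,5) unfolding A_def gen_poly_diff by simp_all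
  ultimately obtain Q where Q: "tfield w1 w2 k Q"
    and eq: "(\<lambda>j z. f j z - A j z) = sprod 2 k (metric_tensor mu) Q"
    by (rule tfield_eq_metric_prod[OF mu])
  have "f = (\<lambda>j z. A j z + sprod 2 k (metric_tensor mu) Q j z)"
    using eq by (simp add: fun_eq_iff algebra_simps flip: eq_diff_eq)
  then show ?thesis using that[OF Q] unfolding A_def by blast
qed

text \<open>The constant of killing_poly_gen_poly_at_i fixes the trace-free field with the same values
  at i and -i; for a real field the two coefficients are conjugate.\<close>
lemma real_killing_eq_trace_free_at_i:
  assumes lat: "is_lattice w1 w2" and mu: "smooth mu" "periodic w1 w2 mu" and m: "1 \<le> m"
    and K: "killing w1 w2 mu m f" and real: "real_field f"
  obtains \<alpha> where
    "\<And>z. poly (gen_poly m f z) \<i> = poly (gen_poly m (trace_free_field mu m \<alpha> (cnj \<alpha>)) z) \<i>"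
    "\<And>z. poly (gen_poly m f z) (- \<i>) = poly (gen_poly m (trace_free_field mu m \<alpha> (cnj \<alpha>)) z) (- \<i>)"
proof -
  obtain b where b: "\<And>z. poly (gen_poly m f z) \<i> = of_real (exp (2 * real m * mu z)) * b"
    using killing_poly_gen_poly_at_i[OF lat mu K] by blast
  define \<alpha> where "\<alpha> = b / 2 ^ m"
  have "poly (gen_poly m f z) \<i> = poly (gen_poly m (trace_free_field mu m \<alpha> (cnj \<alpha>)) z) \<i>" for z
    using b unfolding poly_gen_poly_trace_free_field_at_i[OF m] \<alpha>_def by simp
  moreover have "poly (gen_poly m f z) (- \<i>) = poly (gen_poly m (trace_free_field mu m \<alpha> (cnj \<alpha>)) z) (- \<i>)" for z
    using b unfolding poly_gen_poly_conj_at_i[OF real] poly_gen_poly_trace_free_field_at_i[OF m] \<alpha>_def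
    by simp
  ultimately show ?thesis using that by blast
qed

lemma irreducible_killing_nonzero:
  assumes "irreducible_killing w1 w2 mu m f"
  shows "f \<noteq> (\<lambda>j z. 0)"
proof
  assume "f = (\<lambda>j z. 0)"
  then have "\<exists>(n::nat) ku kv u v.
      (\<forall>i<n. 0 < ku i \<and> 0 < kv i \<and> ku i + kv i = m \<and>
             killing w1 w2 mu (ku i) (u i) \<and> killing w1 w2 mu (kv i) (v i)) \<and>
      f = (\<lambda>j z. \<Sum>i<n. sprod (ku i) (kv i) (u i) (v i) j z)"
    by (intro exI[where x = "0::nat"]) simp
  then show False using assms unfolding irreducible_killing_def by blast
qed

lemma not_irreducible_killing_metric_prod:
  assumes mu: "smooth mu" "periodic w1 w2 mu" and Q: "killing w1 w2 mu k Q"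
  shows "\<not> irreducible_killing w1 w2 mu (k + 2) (sprod 2 k (metric_tensor mu) Q)"
proof (cases "k = 0")
  case True
  have DQ: "dsym mu 0 Q = (\<lambda>j z. 0)" and sQ: "smooth (Q 0)"
    using Q True tfield_smooth unfolding killing_def by auto
  have "pdx (Q 0) z = 0" "pdy (Q 0) z = 0" for z
    using fun_cong[OF fun_cong[OF DQ, of 0], of z] fun_cong[OF fun_cong[OF DQ, of 1], of z]
    by (simp_all add: dsym_def nab_def pd_def)
  then obtain c where c: "\<And>z. Q 0 z = c" using pdx_pdy_zero_imp_constant[OF sQ] by blast
  have "sprod 2 0 (metric_tensor mu) Q = (\<lambda>j z. c * metric_tensor mu j z)"
  proof (rule field_eqI_gen_poly[where k = 2])
    fix z
    show "gen_poly 2 (sprod 2 0 (metric_tensor mu) Q) z = gen_poly 2 (\<lambda>j z. c * metric_tensor mu j z) z"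
      using gen_poly_sprod[of 2 0 "metric_tensor mu" Q z] gen_poly_cmult[of 2 "\<lambda>z. c" "metric_tensor mu" z]
      by (simp add: gen_poly_rank_0 c)
  qed (auto simp: sprod_def metric_tensor_def fun_eq_iff)
  then show ?thesis using True unfolding irreducible_killing_def by auto
next
  case False
  have "\<exists>(n::nat) ku kv u v.
      (\<forall>i<n. 0 < ku i \<and> 0 < kv i \<and> ku i + kv i = k + 2 \<and>
             killing w1 w2 mu (ku i) (u i) \<and> killing w1 w2 mu (kv i) (v i)) \<and>
      sprod 2 k (metric_tensor mu) Q = (\<lambda>j z. \<Sum>i<n. sprod (ku i) (kv i) (u i) (v i) j z)"
    using False Q killing_metric_tensor[OF mu]
    by (intro exI[where x = "1::nat"] exI[where x = "\<lambda>_. 2::nat"] exI[where x = "\<lambda>_. k"]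
        exI[where x = "\<lambda>_. metric_tensor mu"] exI[where x = "\<lambda>_. Q"]) auto
  then show ?thesis unfolding irreducible_killing_def by blast
qed

text \<open>Products of Killing fields of lower rank vanish at i and -i, so a Killing field that does not
  cannot be reducible.\<close>
lemma irreducible_killing_if_poly_gen_poly_at_i_ne_0:
  assumes H: "\<forall>k. 1 \<le> k \<and> k \<le> m - 1 \<longrightarrow> \<not> (\<exists>f. irreducible_killing w1 w2 mu k f)"
    and K: "killing w1 w2 mu m f"
    and nz: "poly (gen_poly m f z) \<i> \<noteq> 0 \<or> poly (gen_poly m f z) (- \<i>) \<noteq> 0"
  shows "irreducible_killing w1 w2 mu m f"
  unfolding irreducible_killing_def
proof (intro conjI K notI impI)
  assume "\<exists>(n::nat) ku kv u v.
      (\<forall>i<n. 0 < ku i \<and> 0 < kv i \<and> ku i + kv i = m \<and>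
             killing w1 w2 mu (ku i) (u i) \<and> killing w1 w2 mu (kv i) (v i)) \<and>
      f = (\<lambda>j z. \<Sum>i<n. sprod (ku i) (kv i) (u i) (v i) j z)"
  then obtain n :: nat and ku kv u v where
      prod: "\<forall>i<n. 0 < ku i \<and> 0 < kv i \<and> ku i + kv i = m \<and>
             killing w1 w2 mu (ku i) (u i) \<and> killing w1 w2 mu (kv i) (v i)"
    and f: "f = (\<lambda>j z. \<Sum>i<n. sprod (ku i) (kv i) (u i) (v i) j z)"
    by blast
  have "poly (gen_poly (ku i) (u i) z) \<i> = 0 \<and> poly (gen_poly (ku i) (u i) z) (- \<i>) = 0" if "i < n" for i
    using prod that by (intro killing_poly_gen_poly_at_i_eq_0[OF H]) auto
  then show False using nz prod unfolding f by (simp add: poly_gen_poly_sum_sprod)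
next
  assume "m = 2" "\<exists>c. f = (\<lambda>j z. c * metric_tensor mu j z)"
  then obtain c where "m = 2" "f = (\<lambda>j z. c * metric_tensor mu j z)" by blast
  then show False
    using nz gen_poly_cmult[of 2 "\<lambda>z. c" "metric_tensor mu" z] by (auto simp: poly_gen_poly_metric_tensor)
qed

section \<open>Irreducible Killing fields and potential fields Z\<close>

lemma potential_Zfield_if_irreducible_killing_eq_trace_free_at_i:
  assumes mu: "smooth mu" "periodic w1 w2 mu" and m: "1 \<le> m" and irr: "irreducible_killing w1 w2 mu m f"
    and at_i: "\<And>z. poly (gen_poly m f z) \<i> = poly (gen_poly m (trace_free_field mu m \<alpha> \<beta>) z) \<i>"
      "\<And>z. poly (gen_poly m f z) (- \<i>) = poly (gen_poly m (trace_free_field mu m \<alpha> \<beta>) z) (- \<i>)"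
  shows "(\<alpha>, \<beta>) \<noteq> (0, 0) \<and>
    potential w1 w2 mu (m - 1) (Zfield mu (m - 1) (- (of_nat m * (\<alpha> + \<beta>))) (- (- \<i> * of_nat m * (\<alpha> - \<beta>))))"
proof -
  have f: "tfield w1 w2 m f" "dsym mu m f = (\<lambda>j z. 0)"
    using irr by (simp_all add: irreducible_killing_def killing_def)
  define A where "A = trace_free_field mu m \<alpha> \<beta>"
  have A0: "A = (\<lambda>j z. 0)" if "(\<alpha>, \<beta>) = (0, 0)"
    using that by (simp add: A_def trace_free_field_def fun_eq_iff)
  show ?thesis
  proof (cases "m = 1")
    case True
    have "f = A"
      using tfield_rank_1_eqI[of w1 w2 f A] f(1) tfield_trace_free_field[OF mu] at_i True
      unfolding A_def by blast
    then have "(\<alpha>, \<beta>) \<noteq> (0, 0)" using irreducible_killing_nonzero[OF irr] A0 by blast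
    moreover have "Zfield mu 0 (\<alpha> + \<beta>) (- \<i> * (\<alpha> - \<beta>)) = (\<lambda>j z. 0)"
      using f(2) dsym_trace_free_field_rank_1_eq_0_iff[OF mu(1), of \<alpha> \<beta>] \<open>f = A\<close> True
      unfolding A_def by simp
    ultimately show ?thesis using True unfolding Zfield_uminus by (simp add: potential_def fun_eq_iff)
  next
    case False
    define k where "k = m - 2"
    have k: "m = k + 2" using m False by (simp add: k_def)
    obtain Q where Q: "tfield w1 w2 k Q" and fQ: "f = (\<lambda>j z. A j z + sprod 2 k (metric_tensor mu) Q j z)"
      using tfield_eq_trace_free_add_metric_prod[OF mu, of k f \<alpha> \<beta>] f(1) at_i
      unfolding A_def k by blast
    have DQ: "dsym mu k Q =
        Zfield mu (k + 1) (- (of_nat m * (\<alpha> + \<beta>))) (- (- \<i> * of_nat m * (\<alpha> - \<beta>)))"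
      using dsym_trace_free_add_metric_prod_eq_0_iff[OF mu(1), of Q k \<alpha> \<beta>] tfield_smooth[OF Q] f(2)
      unfolding fQ A_def k by blast
    have "(\<alpha>, \<beta>) \<noteq> (0, 0)"
    proof
      assume "(\<alpha>, \<beta>) = (0, 0)"
      then have "f = sprod 2 k (metric_tensor mu) Q" "killing w1 w2 mu k Q"
        using fQ A0 Q DQ by (simp_all add: killing_def Zfield_def fun_eq_iff)
      then show False using not_irreducible_killing_metric_prod[OF mu] irr k by blast
    qed
    then show ?thesis using Q DQ k by (auto simp: potential_def)
  qed
qed

lemma killing_eq_trace_free_at_i_if_potential_Zfield:
  assumes mu: "smooth mu" "periodic w1 w2 mu" and m: "1 \<le> m"
    and pot: "potential w1 w2 mu (m - 1)
      (Zfield mu (m - 1) (- (of_nat m * (\<alpha> + \<beta>))) (- (- \<i> * of_nat m * (\<alpha> - \<beta>))))"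
  obtains f where "killing w1 w2 mu m f"
    "\<And>z. poly (gen_poly m f z) \<i> = poly (gen_poly m (trace_free_field mu m \<alpha> \<beta>) z) \<i>"
    "\<And>z. poly (gen_poly m f z) (- \<i>) = poly (gen_poly m (trace_free_field mu m \<alpha> \<beta>) z) (- \<i>)"
proof (cases "m = 1")
  case True
  then have "Zfield mu 0 (\<alpha> + \<beta>) (- \<i> * (\<alpha> - \<beta>)) = (\<lambda>j z. 0)"
    using pot unfolding Zfield_uminus by (simp add: potential_def fun_eq_iff)
  then have "killing w1 w2 mu m (trace_free_field mu m \<alpha> \<beta>)"
    using dsym_trace_free_field_rank_1_eq_0_iff[OF mu(1), of \<alpha> \<beta>] True
    unfolding killing_def by (simp add: tfield_trace_free_field[OF mu])
  then show ?thesis using that by blast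
next
  case False
  define k where "k = m - 2"
  have k: "m = k + 2" using m False by (simp add: k_def)
  obtain v where v: "tfield w1 w2 k v"
    "dsym mu k v = Zfield mu (k + 1) (- (of_nat m * (\<alpha> + \<beta>))) (- (- \<i> * of_nat m * (\<alpha> - \<beta>)))"
    using pot unfolding k potential_def by auto
  define f where "f = (\<lambda>j z. trace_free_field mu m \<alpha> \<beta> j z + sprod 2 k (metric_tensor mu) v j z)"
  have "tfield w1 w2 m f"
    using tfield_add[OF tfield_trace_free_field[OF mu] tfield_sprod[OF tfield_metric_tensor[OF mu] v(1)]]
    unfolding f_def k by (simp add: add.commute)
  moreover have "dsym mu m f = (\<lambda>j z. 0)"
    using dsym_trace_free_add_metric_prod_eq_0_iff[OF mu(1), of v k \<alpha> \<beta>] tfield_smooth[OF v(1)] v(2)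
    unfolding f_def k by simp
  moreover have "poly (gen_poly m f z) \<i> = poly (gen_poly m (trace_free_field mu m \<alpha> \<beta>) z) \<i>"
    "poly (gen_poly m f z) (- \<i>) = poly (gen_poly m (trace_free_field mu m \<alpha> \<beta>) z) (- \<i>)" for z
    using poly_gen_poly_metric_prod_at_i[of k mu v z] unfolding f_def k gen_poly_add by simp_all
  ultimately show ?thesis using that unfolding killing_def by blast
qed

lemma potential_Zfield_if_real_irreducible_killing:
  assumes lat: "is_lattice w1 w2" and mu: "smooth mu" "periodic w1 w2 mu" and m: "1 \<le> m"
    and real: "real_field f" and irr: "irreducible_killing w1 w2 mu m f"
  shows "\<exists>c1 c2 :: real. (c1, c2) \<noteq> (0, 0) \<and>
           potential w1 w2 mu (m - 1) (Zfield mu (m - 1) (of_real c1) (of_real c2))"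
proof -
  have K: "killing w1 w2 mu m f" using irr by (simp add: irreducible_killing_def)
  obtain \<alpha> where "\<And>z. poly (gen_poly m f z) \<i> = poly (gen_poly m (trace_free_field mu m \<alpha> (cnj \<alpha>)) z) \<i>"
    "\<And>z. poly (gen_poly m f z) (- \<i>) = poly (gen_poly m (trace_free_field mu m \<alpha> (cnj \<alpha>)) z) (- \<i>)"
    using real_killing_eq_trace_free_at_i[OF lat mu m K real] by blast
  then have P: "(\<alpha>, cnj \<alpha>) \<noteq> (0, 0) \<and> potential w1 w2 mu (m - 1)
      (Zfield mu (m - 1) (- (of_nat m * (\<alpha> + cnj \<alpha>))) (- (- \<i> * of_nat m * (\<alpha> - cnj \<alpha>))))"
    by (rule potential_Zfield_if_irreducible_killing_eq_trace_free_at_i[OF mu m irr])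
  have "- (of_nat m * (\<alpha> + cnj \<alpha>)) = of_real (- (2 * real m * Re \<alpha>))"
    "- (- \<i> * of_nat m * (\<alpha> - cnj \<alpha>)) = of_real (- (2 * real m * Im \<alpha>))"
    by (simp_all add: complex_eq_iff)
  with P have "\<alpha> \<noteq> 0" and "potential w1 w2 mu (m - 1) (Zfield mu (m - 1)
      (of_real (- (2 * real m * Re \<alpha>))) (of_real (- (2 * real m * Im \<alpha>))))"
    by auto
  moreover have "(- (2 * real m * Re \<alpha>), - (2 * real m * Im \<alpha>)) \<noteq> (0, 0)"
    using m \<open>\<alpha> \<noteq> 0\<close> by (auto simp: complex_eq_iff)
  ultimately show ?thesis by blast
qed

lemma irreducible_killing_if_potential_Zfield:
  assumes mu: "smooth mu" "periodic w1 w2 mu" and m: "1 \<le> m"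
    and H: "\<forall>k. 1 \<le> k \<and> k \<le> m - 1 \<longrightarrow> \<not> (\<exists>f. irreducible_killing w1 w2 mu k f)"
    and c: "(c1, c2) \<noteq> (0, 0)" and pot: "potential w1 w2 mu (m - 1) (Zfield mu (m - 1) c1 c2)"
  shows "\<exists>f. irreducible_killing w1 w2 mu m f"
proof -
  define \<alpha> where "\<alpha> = - (c1 + \<i> * c2) / (2 * of_nat m)"
  define \<beta> where "\<beta> = - (c1 - \<i> * c2) / (2 * of_nat m)"
  have C: "- (of_nat m * (\<alpha> + \<beta>)) = c1" "- (- \<i> * of_nat m * (\<alpha> - \<beta>)) = c2"
    using m by (simp_all add: \<alpha>_def \<beta>_def field_simps)
  obtain f where K: "killing w1 w2 mu m f"
    and "\<And>z. poly (gen_poly m f z) \<i> = poly (gen_poly m (trace_free_field mu m \<alpha> \<beta>) z) \<i>"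
      "\<And>z. poly (gen_poly m f z) (- \<i>) = poly (gen_poly m (trace_free_field mu m \<alpha> \<beta>) z) (- \<i>)"
    using killing_eq_trace_free_at_i_if_potential_Zfield[OF mu m, of \<alpha> \<beta>] pot unfolding C by blast
  moreover have "\<alpha> \<noteq> 0 \<or> \<beta> \<noteq> 0" using c C by auto
  ultimately have "poly (gen_poly m f 0) \<i> \<noteq> 0 \<or> poly (gen_poly m f 0) (- \<i>) \<noteq> 0"
    by (simp add: poly_gen_poly_trace_free_field_at_i[OF m])
  then show ?thesis using irreducible_killing_if_poly_gen_poly_at_i_ne_0[OF H K] by blast
qed

theorem theorem3p2:
  fixes w1 w2 :: complex and mu :: "complex \<Rightarrow> real" and m :: nat
  assumes "is_lattice w1 w2" and "smooth mu" and "periodic w1 w2 mu" and "1 \<le> m"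
  shows "((\<exists>f. real_field f \<and> irreducible_killing w1 w2 mu m f) \<longrightarrow>
            (\<exists>c1 c2 :: real. (c1, c2) \<noteq> (0, 0) \<and>
               potential w1 w2 mu (m - 1) (Zfield mu (m - 1) (of_real c1) (of_real c2))))
       \<and> ((\<forall>k. 1 \<le> k \<and> k \<le> m - 1 \<longrightarrow> \<not> (\<exists>f. irreducible_killing w1 w2 mu k f)) \<longrightarrow>
            (\<exists>c1 c2 :: complex. (c1, c2) \<noteq> (0, 0) \<and>
               potential w1 w2 mu (m - 1) (Zfield mu (m - 1) c1 c2)) \<longrightarrow>
            (\<exists>f. irreducible_killing w1 w2 mu m f))"
  using potential_Zfield_if_real_irreducible_killing[OF assms]
    irreducible_killing_if_potential_Zfield[OF assms(2-4)]
  by blast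

end
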